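(* Let $T$ be a tree with $n+1$ unlabeled vertices and $n$ directed edges labeled $1,\dots,n$, and let $I_T\in H_{2,n}$ be the corresponding monomial ideal. Then the dimension of the tangent space of $H_{2,n}$ at $I_T$ equals $\sum_v f(\deg(v))$, the sum over all vertices $v$ of $T$, where $f(a)=3(a-1)$ if $1\le a\le 3$ and $f(a)=a(a-1)$ if $a\ge 3$.
   Context: Over a field $K$, let $X=\begin{bmatrix}x_1&\cdots&x_n\\ y_1&\cdots&y_n\end{bmatrix}$, $K[X]$ $\mathbb{Z}^n$-graded by $\deg x_i=\deg y_i=e_i$. $H_{2,n}$ is the multigraded Hilbert scheme of $\mathbb{Z}^n$-homogeneous ideals $I$ with $\dim_K(K[X]/I)_u=u_1+\cdots+u_n+1$ for all $u\in\mathbb{N}^n$; its tangent space at $I$ is $\mathrm{Hom}_{K[X]}(I,K[X]/I)_0$. For distinct $i,j$, set $z_{ij}=x_j$ if the directed edge $j$ points away from edge $i$ (the tail of $j$ is the endpoint of $j$ closer to edge $i$), and $z_{ij}=y_j$ otherwise; $I_T=\langle z_{ij}z_{ji}:1\le i<j\le n\rangle$. *)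

theory Defs
  imports Complex_Main "HOL-Library.Poly_Mapping" "HOL-Library.Function_Algebras"
begin

definition adj_without :: "('e \<Rightarrow> 'v) \<Rightarrow> ('e \<Rightarrow> 'v) \<Rightarrow> 'e set \<Rightarrow> ('v \<times> 'v) set" where
  "adj_without tail head D = {(tail e, head e) | e. e \<notin> D} \<union> {(head e, tail e) | e. e \<notin> D}"

text \<open>Connected in the undirected sense, and acyclic: every edge is a bridge
  (its endpoints are disconnected after deleting it; this also excludes loops
  and multiple edges).\<close>

definition is_tree :: "('e \<Rightarrow> 'v) \<Rightarrow> ('e \<Rightarrow> 'v) \<Rightarrow> bool" where
  "is_tree tail head \<longleftrightarrow>
     (\<forall>u v. (u, v) \<in> (adj_without tail head {})\<^sup>*) \<and>
     (\<forall>e. (tail e, head e) \<notin> (adj_without tail head {e})\<^sup>*)"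

definition vdeg :: "('e::finite \<Rightarrow> 'v) \<Rightarrow> ('e \<Rightarrow> 'v) \<Rightarrow> 'v \<Rightarrow> nat" where
  "vdeg tail head v = card {e. tail e = v} + card {e. head e = v}"

text \<open>The tail of edge j is the endpoint of j closer to edge i (i \<noteq> j): in a tree
  this is the endpoint lying in the same component of T - j as edge i.\<close>

definition tail_closer :: "('e \<Rightarrow> 'v) \<Rightarrow> ('e \<Rightarrow> 'v) \<Rightarrow> 'e \<Rightarrow> 'e \<Rightarrow> bool" where
  "tail_closer tail head i j \<longleftrightarrow> (tail j, tail i) \<in> (adj_without tail head {j})\<^sup>*"

datatype 'e var = X 'e | Y 'e

type_synonym 'e monom = "'e var \<Rightarrow>\<^sub>0 nat"
type_synonym ('e, 'k) mpoly = "'e monom \<Rightarrow>\<^sub>0 'k"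

definition pvar :: "'e var \<Rightarrow> ('e, 'k::comm_ring_1) mpoly" where
  "pvar v = Poly_Mapping.single (Poly_Mapping.single v 1) 1"

definition smult_mp :: "'k::comm_ring_1 \<Rightarrow> ('e, 'k) mpoly \<Rightarrow> ('e, 'k) mpoly" where
  "smult_mp c p = Poly_Mapping.map ((*) c) p"

definition mdeg :: "'e monom \<Rightarrow> 'e \<Rightarrow> nat" where
  "mdeg m e = Poly_Mapping.lookup m (X e) + Poly_Mapping.lookup m (Y e)"

definition homogeneous :: "('e \<Rightarrow> nat) \<Rightarrow> ('e, 'k::zero) mpoly \<Rightarrow> bool" where
  "homogeneous u p \<longleftrightarrow> (\<forall>m\<in>Poly_Mapping.keys p. mdeg m = u)"

definition ideal_gen :: "('e, 'k::comm_ring_1) mpoly set \<Rightarrow> ('e, 'k) mpoly set" where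
  "ideal_gen S = module.span ((*) :: ('e, 'k) mpoly \<Rightarrow> _) S"

definition zvar :: "('e \<Rightarrow> 'v) \<Rightarrow> ('e \<Rightarrow> 'v) \<Rightarrow> 'e \<Rightarrow> 'e \<Rightarrow> 'e var" where
  "zvar tail head i j = (if tail_closer tail head i j then X j else Y j)"

definition I_T :: "('e \<Rightarrow> 'v) \<Rightarrow> ('e \<Rightarrow> 'v) \<Rightarrow> ('e, 'k::comm_ring_1) mpoly set" where
  "I_T tail head = ideal_gen {pvar (zvar tail head i j) * pvar (zvar tail head j i) | i j. i \<noteq> j}"

text \<open>For a monomial ideal I, R/I is modelled (as K-vector space and R-module)
  by the K-span of the standard monomials (monomials not in I); qproj is the
  projection R \<rightarrow> R/I, whose kernel is I, and r\<cdot>[q] = qproj (r*q).\<close>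

definition qproj :: "('e, 'k::comm_ring_1) mpoly set \<Rightarrow> ('e, 'k) mpoly \<Rightarrow> ('e, 'k) mpoly" where
  "qproj I p = (\<Sum>m\<in>{m\<in>Poly_Mapping.keys p. Poly_Mapping.single m 1 \<notin> I}. Poly_Mapping.single m (Poly_Mapping.lookup p m))"

text \<open>Degree-0 R-module homomorphisms I \<rightarrow> R/I, as functions on R vanishing off I.\<close>

definition tangent_hom :: "('e, 'k::comm_ring_1) mpoly set \<Rightarrow> (('e, 'k) mpoly \<Rightarrow> ('e, 'k) mpoly) set" where
  "tangent_hom I = {\<phi>.
     (\<forall>p. p \<notin> I \<longrightarrow> \<phi> p = 0) \<and>
     (\<forall>p\<in>I. qproj I (\<phi> p) = \<phi> p) \<and>
     (\<forall>p\<in>I. \<forall>q\<in>I. \<phi> (p + q) = \<phi> p + \<phi> q) \<and>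
     (\<forall>r. \<forall>p\<in>I. \<phi> (r * p) = qproj I (r * \<phi> p)) \<and>
     (\<forall>u. \<forall>p\<in>I. homogeneous u p \<longrightarrow> homogeneous u (\<phi> p))}"

definition tangent_dim :: "('e, 'k::field) mpoly set \<Rightarrow> nat" where
  "tangent_dim I = vector_space.dim (\<lambda>c \<phi> p. smult_mp c (\<phi> p)) (tangent_hom I)"

definition f_loc :: "nat \<Rightarrow> nat" where
  "f_loc a = (if a \<le> 3 then 3 * (a - 1) else a * (a - 1))"

end

theory Submission
  imports Defs
begin

text \<open>
  A degree-0 homomorphism I_T \<rightarrow> R/I_T is determined by the images of the generators
  z_ij z_ji; these images must be homogeneous of the same multidegree and agree, modulo I_T,
  on the lcm of any two generators, and every such compatible family extends uniquely.
  Writing w_ij for the variable of edge j other than z_ij, the standard monomials of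
  multidegree e_i + e_j are w_ji z_ij, w_ij z_ji and w_ij w_ji,
  so a compatible family is given by coefficients c_ij, c_ji and g_ij.  The only syzygies
  that survive modulo I_T relate z_ij z_ji and z_ik z_ki when z_ji = z_ki; in the tree they
  force c_ij = c_ik whenever the paths from i to j and to k leave i through the same edge,
  and g_ij = 0 unless i and j are the two edges at a vertex of degree two.  So the tangent
  space has a basis indexed by the ordered pairs of adjacent edges, sum_v deg v (deg v - 1)
  of them, together with the vertices of degree two, which gives sum_v f (deg v).
\<close>

section \<open>Paths in a tree\<close>

locale tree =
  fixes tail head :: "'e::finite \<Rightarrow> 'v"
  assumes is_tree: "is_tree tail head"
begin

definition linked :: "'e set \<Rightarrow> 'v \<Rightarrow> 'v \<Rightarrow> bool" where
  "linked D x y \<longleftrightarrow> (x, y) \<in> (adj_without tail head D)\<^sup>*"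

definition incident :: "'e \<Rightarrow> 'v \<Rightarrow> bool" where
  "incident e x \<longleftrightarrow> tail e = x \<or> head e = x"

abbreviation closer :: "'e \<Rightarrow> 'e \<Rightarrow> bool" where
  "closer \<equiv> tail_closer tail head"

text \<open>For j distinct from i and k: the edges i and k lie in different components of T - j.\<close>

abbreviation separates :: "'e \<Rightarrow> 'e \<Rightarrow> 'e \<Rightarrow> bool" where
  "separates j i k \<equiv> closer i j \<noteq> closer k j"

lemma closer_iff_linked_tail: "closer a b = linked {b} (tail b) (tail a)"
  by (simp add: tail_closer_def linked_def)

lemma linked_refl [simp]: "linked D x x"
  by (simp add: linked_def)

lemma sym_adj_without: "sym (adj_without tail head D)"
  by (auto simp: adj_without_def sym_def)

lemma linked_sym: "linked D x y \<Longrightarrow> linked D y x"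
  unfolding linked_def by (meson sym_adj_without sym_rtrancl symD)

lemma linked_commute: "linked D x y = linked D y x"
  using linked_sym by blast

lemma linked_trans: "linked D x y \<Longrightarrow> linked D y z \<Longrightarrow> linked D x z"
  unfolding linked_def by (rule rtrancl_trans)

lemma linked_antimono: "D \<subseteq> D' \<Longrightarrow> linked D' x y \<Longrightarrow> linked D x y"
  unfolding linked_def adj_without_def by (erule rtrancl_mono[THEN subsetD, rotated]) blast

lemma linked_tail_head: "e \<notin> D \<Longrightarrow> linked D (tail e) (head e)"
  unfolding linked_def adj_without_def by blast

lemma linked_incident: "e \<notin> D \<Longrightarrow> incident e x \<Longrightarrow> incident e y \<Longrightarrow> linked D x y"
  unfolding incident_def using linked_tail_head linked_sym by (metis linked_refl)

lemma linked_split: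
  "linked D x y \<Longrightarrow>
    linked (insert e D) x y \<or> linked (insert e D) x (tail e) \<or> linked (insert e D) x (head e)"
  unfolding linked_def
proof (induction rule: rtrancl_induct)
  case (step y z)
  from step.hyps(2) obtain f where f: "f \<notin> D" "(y = tail f \<and> z = head f) \<or> (y = head f \<and> z = tail f)"
    unfolding adj_without_def by blast
  show ?case
  proof (cases "f = e")
    case True
    with step.IH f show ?thesis by auto
  next
    case False
    then have "(y, z) \<in> adj_without tail head (insert e D)"
      using f unfolding adj_without_def by blast
    with step.IH show ?thesis
      by (meson rtrancl.rtrancl_into_rtrancl)
  qed
qed simp

lemma linked_connected: "linked {} x y"
  using is_tree unfolding is_tree_def linked_def by blast

lemma not_linked_tail_head: "\<not> linked {e} (tail e) (head e)"
  using is_tree unfolding is_tree_def linked_def by blast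

lemma tail_neq_head: "tail e \<noteq> head e"
  using not_linked_tail_head by (metis linked_refl)

lemma linked_tail_or_head: "linked {e} x (tail e) \<or> linked {e} x (head e)"
  using linked_split[OF linked_connected[of x "tail e"], of e] by (auto simp: linked_commute)

lemma not_linked_incident: "incident e x \<Longrightarrow> incident e y \<Longrightarrow> x \<noteq> y \<Longrightarrow> \<not> linked {e} x y"
  unfolding incident_def using not_linked_tail_head linked_sym by blast

lemma linked_if_unlinked_to_both: "\<not> linked {e} x y \<Longrightarrow> \<not> linked {e} x z \<Longrightarrow> linked {e} y z"
  using linked_tail_or_head[of e x] linked_tail_or_head[of e y] linked_tail_or_head[of e z]
    not_linked_tail_head
  by (metis linked_sym linked_trans)

lemma linked_differ_iff: "(linked {e} z x \<noteq> linked {e} z y) = (\<not> linked {e} x y)"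
  using linked_if_unlinked_to_both linked_trans linked_sym by metis

lemma closer_iff_linked_incident: "a \<noteq> b \<Longrightarrow> incident a x \<Longrightarrow> closer a b = linked {b} (tail b) x"
  unfolding closer_iff_linked_tail
  by (metis linked_incident linked_sym linked_trans incident_def singletonD)

lemma common_vertex_unique:
  assumes "i \<noteq> j" "incident i v" "incident j v" "incident i w" "incident j w"
  shows "v = w"
proof (rule ccontr)
  assume "v \<noteq> w"
  then have "\<not> linked {i} v w" using not_linked_incident assms by blast
  moreover have "linked {i} v w" using linked_incident[of j "{i}" v w] assms by auto
  ultimately show False by blast
qed

definition opposite :: "'e \<Rightarrow> 'v \<Rightarrow> 'v" where
  "opposite e x = (if tail e = x then head e else tail e)"

lemma incident_opposite: "incident e (opposite e x)"
  by (simp add: opposite_def incident_def)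

lemma opposite_neq: "incident e x \<Longrightarrow> opposite e x \<noteq> x"
  unfolding opposite_def incident_def by (metis tail_neq_head)

lemma incident_cases: "incident e x \<Longrightarrow> incident e y \<Longrightarrow> y = x \<or> y = opposite e x"
  by (auto simp: opposite_def incident_def)

lemma not_linked_opposite: "incident j t \<Longrightarrow> \<not> linked {j} t (opposite j t)"
  using not_linked_incident incident_opposite opposite_neq by metis

lemma vertex_reached_through_edge:
  "x = t \<or> (\<exists>j. incident j t \<and> linked {j} (opposite j t) x)"
proof -
  have "(t, x) \<in> (adj_without tail head {})\<^sup>*"
    using linked_connected unfolding linked_def by blast
  then show ?thesis
  proof (induction rule: rtrancl_induct)
    case (step y z)
    from step.hyps(2) obtain f where f: "incident f y" "incident f z"
      unfolding adj_without_def incident_def by blast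
    from step.IH show ?case
    proof
      assume "y = t"
      then show ?thesis using f incident_cases[of f t z] by (metis linked_refl)
    next
      assume "\<exists>j. incident j t \<and> linked {j} (opposite j t) y"
      then obtain j where j: "incident j t" "linked {j} (opposite j t) y" by blast
      show ?thesis
      proof (cases "f = j")
        case True
        then show ?thesis using f j incident_cases[of j t z] by (metis linked_refl)
      next
        case False
        then have "linked {j} y z" using f linked_incident by simp
        then show ?thesis using j linked_trans by blast
      qed
    qed
  qed simp
qed

lemma edge_toward_vertex_unique:
  assumes "incident j t" "incident j' t" "j \<noteq> j'" "\<not> linked {j} t y" "\<not> linked {j'} t y"
  shows False
proof -
  have o: "linked {j} (opposite j t) y"
    using assms(4) linked_if_unlinked_to_both[of j t "opposite j t" y] not_linked_opposite[OF assms(1)]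
    by (metis opposite_neq assms(1))
  from linked_split[OF o, of j']
  have "linked {j', j} (opposite j t) y \<or> linked {j', j} (opposite j t) (tail j')
      \<or> linked {j', j} (opposite j t) (head j')"
    by (simp add: insert_commute)
  then show False
  proof (elim disjE)
    assume "linked {j', j} (opposite j t) y"
    then have "linked {j'} (opposite j t) y" using linked_antimono[of "{j'}" "{j',j}"] by blast
    moreover have "linked {j'} t (opposite j t)" using assms linked_incident incident_opposite by simp
    ultimately show False using assms(5) linked_trans by blast
  next
    assume a: "linked {j', j} (opposite j t) (tail j')"
    have "linked {j} (tail j') t"
      using assms linked_incident[of j' "{j}" "tail j'" t] by (auto simp: incident_def)
    then show False using linked_antimono[of "{j}" "{j',j}"] a linked_trans not_linked_opposite[OF assms(1)]
      by (metis linked_sym insert_commute subset_insertI)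
  next
    assume a: "linked {j', j} (opposite j t) (head j')"
    have "linked {j} (head j') t"
      using assms linked_incident[of j' "{j}" "head j'" t] by (auto simp: incident_def)
    then show False using linked_antimono[of "{j}" "{j',j}"] a linked_trans not_linked_opposite[OF assms(1)]
      by (metis linked_sym insert_commute subset_insertI)
  qed
qed

lemma ex1_edge_toward_vertex:
  assumes "\<not> incident k t"
  shows "\<exists>!j. incident j t \<and> \<not> linked {j} t (tail k)"
proof -
  have "tail k \<noteq> t" using assms by (simp add: incident_def)
  then obtain j where j: "incident j t" "linked {j} (opposite j t) (tail k)"
    using vertex_reached_through_edge[of "tail k" t] by blast
  then have "\<not> linked {j} t (tail k)"
    using not_linked_opposite[OF j(1)] linked_trans linked_sym by blast
  with j(1) show ?thesis using edge_toward_vertex_unique by blast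
qed

text \<open>The endpoint of i facing k, and the first edge after i on the path from i to k
  (which is k itself when k meets i).\<close>

definition near_end :: "'e \<Rightarrow> 'e \<Rightarrow> 'v" where
  "near_end i k = (if closer k i then tail i else head i)"

definition branch :: "'e \<Rightarrow> 'e \<Rightarrow> 'e" where
  "branch i k = (if incident k (near_end i k) then k
     else (THE j. incident j (near_end i k) \<and> \<not> linked {j} (near_end i k) (tail k)))"

lemma incident_near_end: "incident i (near_end i k)"
  by (simp add: near_end_def incident_def)

lemma near_end_linked: "linked {i} (near_end i k) (tail k)"
  unfolding near_end_def closer_iff_linked_tail using linked_tail_or_head linked_sym by metis

lemma near_end_adjacent:
  assumes "i \<noteq> j" "incident i v" "incident j v"
  shows "near_end i j = v"
proof -
  have s: "closer j i = linked {i} (tail i) v" using closer_iff_linked_incident assms by metis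
  show ?thesis
  proof (cases "closer j i")
    case True
    then have "v = tail i" using s assms(2) not_linked_tail_head unfolding incident_def by auto
    then show ?thesis using True unfolding near_end_def by simp
  next
    case False
    then have "v \<noteq> tail i" using s by auto
    then show ?thesis using False assms(2) unfolding near_end_def incident_def by auto
  qed
qed

lemma branch_spec:
  assumes "k \<noteq> i"
  shows "incident (branch i k) (near_end i k) \<and> branch i k \<noteq> i
    \<and> (branch i k = k \<or> separates (branch i k) i k) \<and> closer (branch i k) i = closer k i"
proof (cases "incident k (near_end i k)")
  case True
  then show ?thesis using assms by (simp add: branch_def)
next
  case False
  define x where "x = near_end i k"
  define j where "j = branch i k"
  have "j = (THE j. incident j x \<and> \<not> linked {j} x (tail k))"
    using False by (simp add: j_def branch_def x_def)
  then have "incident j x \<and> \<not> linked {j} x (tail k)"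
    using theI'[OF ex1_edge_toward_vertex] False x_def by simp
  then have j: "incident j x" "\<not> linked {j} x (tail k)" by auto
  have xi: "incident i x" "linked {i} x (tail k)" using incident_near_end near_end_linked x_def by auto
  have ji: "j \<noteq> i" using j xi by auto
  have "separates j i k"
    using closer_iff_linked_incident[OF ji[symmetric] xi(1)] closer_iff_linked_tail[of k j]
      linked_differ_iff j(2)
    by metis
  moreover have "closer j i = closer k i"
    using closer_iff_linked_incident[OF ji j(1)] closer_iff_linked_tail[of k i] xi(2)
      linked_trans linked_sym
    by metis
  ultimately show ?thesis using j ji x_def j_def by simp
qed

lemma not_separates_at_far_end:
  assumes "k \<noteq> i" "i \<noteq> j" "incident j (opposite i (near_end i k))"
  shows "j \<noteq> k \<and> \<not> separates j i k"
proof -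
  define x where "x = near_end i k"
  define s where "s = opposite i x"
  have xi: "incident i x" "linked {i} x (tail k)" using incident_near_end near_end_linked x_def by auto
  have bs: "\<not> linked {i} x s" using not_linked_opposite[OF xi(1)] s_def by simp
  have si: "incident i s" "incident j s" using assms s_def x_def incident_opposite by auto
  have "closer k i = linked {i} (tail i) x"
    using closer_iff_linked_tail[of k i] xi(2) linked_trans linked_sym by metis
  then have "j \<noteq> k"
    using closer_iff_linked_incident[of k i s] assms(1) si bs linked_differ_iff by metis
  moreover have "\<not> separates j i k"
  proof
    assume "separates j i k"
    then have nr: "\<not> linked {j} s (tail k)"
      using closer_iff_linked_incident[OF assms(2) si(1)] closer_iff_linked_tail[of k j]
        linked_differ_iff
      by metis
    from linked_split[OF xi(2), of j]
    consider "linked {j, i} x (tail k)" | "linked {j, i} x (tail j)" | "linked {j, i} x (head j)"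
      by auto
    then show False
    proof cases
      case 1
      then have "linked {j} x (tail k)" using linked_antimono[of "{j}" "{j,i}"] by blast
      moreover have "linked {j} s x" using linked_incident[of i "{j}" s x] assms si xi by auto
      ultimately show False using nr linked_trans by blast
    next
      case 2
      then have "linked {i} x (tail j)" using linked_antimono[of "{i}" "{j,i}"] by blast
      moreover have "linked {i} (tail j) s"
        using linked_incident[of j "{i}" "tail j" s] assms si by (auto simp: incident_def)
      ultimately show False using bs linked_trans by blast
    next
      case 3
      then have "linked {i} x (head j)" using linked_antimono[of "{i}" "{j,i}"] by blast
      moreover have "linked {i} (head j) s"
        using linked_incident[of j "{i}" "head j" s] assms si by (auto simp: incident_def)
      ultimately show False using bs linked_trans by blast
    qed
  qed
  ultimately show ?thesis ..
qed

lemma branch_eqI: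
  assumes "k \<noteq> i" "i \<noteq> j" "incident i y" "incident j y" "j = k \<or> separates j i k"
  shows "j = branch i k"
proof -
  define x where "x = near_end i k"
  have xi: "incident i x" "linked {i} x (tail k)" using incident_near_end near_end_linked x_def by auto
  have yx: "y = x"
    using incident_cases[OF xi(1) assms(3)] not_separates_at_far_end[OF assms(1,2)] assms(4,5) x_def
    by blast
  show ?thesis
  proof (cases "j = k")
    case True
    then show ?thesis using assms yx x_def by (simp add: branch_def)
  next
    case False
    with assms have d: "separates j i k" by simp
    have nr: "\<not> linked {j} x (tail k)"
      using closer_iff_linked_incident[OF assms(2) xi(1)] closer_iff_linked_tail[of k j]
        linked_differ_iff d
      by metis
    have nk: "\<not> incident k x"
      using closer_iff_linked_incident[OF assms(2) xi(1)] closer_iff_linked_incident[of k j x] False d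
      by metis
    have "(THE j. incident j x \<and> \<not> linked {j} x (tail k)) = j"
      by (rule the1_equality) (use ex1_edge_toward_vertex nk nr assms yx in auto)
    then show ?thesis using nk x_def by (simp add: branch_def)
  qed
qed

lemma branch_adjacent:
  assumes "i \<noteq> j" "incident i v" "incident j v"
  shows "branch i j = j"
  using branch_eqI[of j i j v] assms by simp

lemma branch_eq_of_separates:
  assumes "i \<noteq> j" "i \<noteq> k" "j \<noteq> k" "closer j i = closer k i" "separates j i k"
  shows "branch i k = branch i j"
proof -
  define x where "x = near_end i j"
  define b where "b = branch i j"
  have xx: "near_end i k = x" using assms(4) by (simp add: near_end_def x_def)
  have b: "incident b x" "b \<noteq> i" "b = j \<or> separates b i j"
    using branch_spec[of j i] assms b_def x_def by auto
  have xi: "incident i x" using incident_near_end x_def by auto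
  have "b = k \<or> separates b i k"
  proof (cases "b = j")
    case False
    show ?thesis
    proof (rule ccontr)
      assume c: "\<not> (b = k \<or> separates b i k)"
      have sib: "closer i b = linked {b} (tail b) x"
        using closer_iff_linked_incident[OF b(2)[symmetric] xi] .
      have r1: "linked {b} x (tail k)"
        using c sib closer_iff_linked_tail[of k b] linked_differ_iff by metis
      have r2: "\<not> linked {b} x (tail j)"
        using False b(3) sib closer_iff_linked_tail[of j b] linked_differ_iff by metis
      have r3: "\<not> linked {j} x (tail k)"
        using closer_iff_linked_incident[OF assms(1) xi] assms(5) closer_iff_linked_tail[of k j]
          linked_differ_iff
        by metis
      from linked_split[OF r1, of j]
      consider "linked {j, b} x (tail k)" | "linked {j, b} x (tail j)" | "linked {j, b} x (head j)"
        by auto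
      then show False
      proof cases
        case 1
        then show False using linked_antimono[of "{j}" "{j,b}"] r3 by blast
      next
        case 2
        then show False using linked_antimono[of "{b}" "{j,b}"] r2 by blast
      next
        case 3
        then have "linked {b} x (head j)" using linked_antimono[of "{b}" "{j,b}"] by blast
        moreover have "linked {b} (head j) (tail j)" using linked_tail_head[of j "{b}"] False linked_sym by auto
        ultimately show False using r2 linked_trans by blast
      qed
    qed
  qed (use assms in simp)
  then show ?thesis using branch_eqI[of k i b x] assms b xi xx b_def by metis
qed

lemma branch_eq:
  assumes "i \<noteq> j" "i \<noteq> k" "j \<noteq> k" "closer j i = closer k i"
    and "separates j i k \<or> separates k i j"
  shows "branch i j = branch i k"
  using assms branch_eq_of_separates[of i j k] branch_eq_of_separates[of i k j] by auto

lemma ex_edge_separating: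
  assumes "i \<noteq> j" "\<not> (\<exists>v. incident i v \<and> incident j v)"
  shows "\<exists>k. k \<noteq> i \<and> k \<noteq> j \<and> closer j i = closer k i \<and> separates k i j"
proof -
  have b: "incident (branch i j) (near_end i j)" "branch i j \<noteq> i"
    "branch i j = j \<or> separates (branch i j) i j" "closer (branch i j) i = closer j i"
    using branch_spec[OF not_sym[OF assms(1)]] by blast+
  have "branch i j \<noteq> j"
    using b(1) assms(2) incident_near_end[of i j] by metis
  then show ?thesis using b(2,3,4) by blast
qed

lemma closer_at_common_vertex:
  assumes "i \<noteq> j" "i \<noteq> k" "j \<noteq> k" "incident i v" "incident j v" "incident k v"
  shows "closer j i = closer k i \<and> closer i j = closer k j"
  using closer_iff_linked_incident[of j i v] closer_iff_linked_incident[of k i v]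
    closer_iff_linked_incident[of i j v] closer_iff_linked_incident[of k j v] assms
  by simp

lemma closer_at_degree_two_vertex:
  assumes "i \<noteq> j" "incident i v" "incident j v" "\<forall>e. incident e v \<longrightarrow> e = i \<or> e = j"
    "k \<noteq> i" "k \<noteq> j" "closer j i = closer k i"
  shows "separates j i k \<and> closer i k = closer j k"
proof -
  have "closer i k = closer j k"
    using closer_iff_linked_incident[of i k v] closer_iff_linked_incident[of j k v] assms by simp
  moreover have "branch i k = j"
    using branch_spec[OF assms(5)] near_end_adjacent[OF assms(1-3)] assms(4,7)
    by (metis near_end_def)
  then have "separates j i k" using branch_spec[OF assms(5)] assms(6) by metis
  ultimately show ?thesis by simp
qed

end

section \<open>The tangent space at a monomial ideal\<close>

abbreviation lookup :: "('a \<Rightarrow>\<^sub>0 'b::zero) \<Rightarrow> 'a \<Rightarrow> 'b" where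
  "lookup \<equiv> Poly_Mapping.lookup"

abbreviation keys :: "('a \<Rightarrow>\<^sub>0 'b::zero) \<Rightarrow> 'a set" where
  "keys \<equiv> Poly_Mapping.keys"

abbreviation single :: "'a \<Rightarrow> 'b::zero \<Rightarrow> 'a \<Rightarrow>\<^sub>0 'b" where
  "single \<equiv> Poly_Mapping.single"

lemma lookup_minus_nat: "lookup (f - g) k = lookup f k - lookup (g :: 'a \<Rightarrow>\<^sub>0 nat) k"
  by (simp add: minus_poly_mapping.rep_eq)

definition mdvd :: "('x \<Rightarrow>\<^sub>0 nat) \<Rightarrow> ('x \<Rightarrow>\<^sub>0 nat) \<Rightarrow> bool" where
  "mdvd a m \<longleftrightarrow> (\<exists>t. m = a + t)"

lemma mdvd_iff_lookup: "mdvd a m \<longleftrightarrow> (\<forall>x. lookup a x \<le> lookup m x)"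
proof
  assume "mdvd a m" then show "\<forall>x. lookup a x \<le> lookup m x"
    by (auto simp: mdvd_def lookup_add)
next
  assume h: "\<forall>x. lookup a x \<le> lookup m x"
  have "m = a + (m - a)"
    by (rule poly_mapping_eqI) (use h in \<open>simp add: lookup_add lookup_minus_nat\<close>)
  then show "mdvd a m" unfolding mdvd_def by blast
qed

lemma mdvd_diff_add: "mdvd a m \<Longrightarrow> (m - a) + a = m"
  unfolding mdvd_def by (auto simp: add.commute)

lemma mdvd_add_left: "mdvd a m \<Longrightarrow> mdvd a (t + m)"
  unfolding mdvd_def by (metis add.left_commute)

lemma mdvd_refl [simp]: "mdvd a a"
  unfolding mdvd_def by (metis add.right_neutral)

lemma mdvd_add_self [simp]: "mdvd a (a + t)"
  unfolding mdvd_def by blast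

lemma mdvd_diff_assoc: "mdvd g m \<Longrightarrow> t + m - g = t + (m - g)"
  unfolding mdvd_def by (metis add.left_commute add_diff_cancel_left')

definition mon_in :: "'x monom set \<Rightarrow> 'x monom \<Rightarrow> bool" where
  "mon_in G m \<longleftrightarrow> (\<exists>g\<in>G. mdvd g m)"

lemma mon_in_add_left: "mon_in G m \<Longrightarrow> mon_in G (t + m)"
  unfolding mon_in_def using mdvd_add_left by blast

lemma mon_in_gen: "g \<in> G \<Longrightarrow> mon_in G g"
  unfolding mon_in_def using mdvd_refl by blast

definition mon_ideal :: "'x monom set \<Rightarrow> ('x, 'k::comm_ring_1) mpoly set" where
  "mon_ideal G = ideal_gen ((\<lambda>g. single g 1) ` G)"

lemma module_mpoly: "module ((*) :: ('x, 'k::comm_ring_1) mpoly \<Rightarrow> _)"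
  by unfold_locales (auto simp: algebra_simps)

lemma keys_single_mult: "keys (single a c * p) \<subseteq> (\<lambda>m. a + m) ` keys p"
  using keys_mult[of "single a c" p] by (auto split: if_splits)

lemma poly_mapping_sum_single: "p = (\<Sum>m\<in>keys p. single m (lookup p m))"
proof (rule poly_mapping_eqI)
  fix k
  show "lookup p k = lookup (\<Sum>m\<in>keys p. single m (lookup p m)) k"
    by (auto simp: lookup_sum lookup_single when_def in_keys_iff)
qed

lemma mon_ideal_keys_mon_in:
  assumes "(p :: ('x, 'k::comm_ring_1) mpoly) \<in> mon_ideal G" "m \<in> keys p"
  shows "mon_in G m"
proof -
  interpret M: module "(*) :: ('x, 'k) mpoly \<Rightarrow> _" by (rule module_mpoly)
  let ?T = "{p :: ('x, 'k) mpoly. \<forall>m\<in>keys p. mon_in G m}"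
  have sub: "M.subspace ?T"
    unfolding M.subspace_def
  proof (intro conjI ballI allI)
    fix x y assume "x \<in> ?T" "y \<in> ?T"
    then show "x + y \<in> ?T" using keys_add[of x y] by auto
  next
    fix c x assume x: "x \<in> ?T"
    show "c * x \<in> ?T"
    proof (intro CollectI ballI)
      fix m assume "m \<in> keys (c * x)"
      then obtain a b where "m = a + b" "b \<in> keys x" using keys_mult[of c x] by auto
      then show "mon_in G m" using x mon_in_add_left by auto
    qed
  qed simp
  have gens: "(\<lambda>g. single g 1) ` G \<subseteq> ?T" using mon_in_gen by auto
  show ?thesis
    using assms M.span_minimal[OF gens sub] unfolding mon_ideal_def ideal_gen_def by blast
qed

lemma mon_ideal_if_keys_mon_in:
  assumes "\<forall>m\<in>keys p. mon_in G m"
  shows "(p :: ('x, 'k::comm_ring_1) mpoly) \<in> mon_ideal G"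
proof -
  interpret M: module "(*) :: ('x, 'k) mpoly \<Rightarrow> _" by (rule module_mpoly)
  have "single m (lookup p m) \<in> M.span ((\<lambda>g. single g 1) ` G)" if m: "m \<in> keys p" for m
  proof -
    obtain g where g: "g \<in> G" "mdvd g m" using assms m unfolding mon_in_def by blast
    have "single m (lookup p m) = single (m - g) (lookup p m) * single g 1"
      using mdvd_diff_add[OF g(2)] by (simp add: mult_single)
    then show ?thesis using M.span_scale[OF M.span_base[of "single g 1"]] g by auto
  qed
  then have "(\<Sum>m\<in>keys p. single m (lookup p m)) \<in> M.span ((\<lambda>g. single g 1) ` G)"
    by (intro M.span_sum) auto
  then show ?thesis
    unfolding mon_ideal_def ideal_gen_def using poly_mapping_sum_single[of p] by simp
qed

lemma mem_mon_ideal: "(p :: ('x, 'k::comm_ring_1) mpoly) \<in> mon_ideal G \<longleftrightarrow> (\<forall>m\<in>keys p. mon_in G m)"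
  using mon_ideal_keys_mon_in mon_ideal_if_keys_mon_in by blast

lemma single_mult_sum:
  "single a c * p = (\<Sum>m\<in>keys p. single (a + m) (c * lookup p m))"
proof -
  have "single a c * p = single a c * (\<Sum>m\<in>keys p. single m (lookup p m))" using poly_mapping_sum_single[of p] by simp
  also have "\<dots> = (\<Sum>m\<in>keys p. single (a + m) (c * lookup p m))"
    by (simp add: sum_distrib_left mult_single)
  finally show ?thesis .
qed

lemma lookup_single_mult:
  "lookup (single a c * p) M = (if mdvd a M then c * lookup p (M - a) else 0)"
proof -
  have "lookup (single a c * p) M = (\<Sum>m\<in>keys p. (c * lookup p m when a + m = M))"
    by (simp add: single_mult_sum lookup_sum lookup_single)
  also have "\<dots> = (if mdvd a M then c * lookup p (M - a) else 0)"
  proof (cases "mdvd a M")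
    case True
    then obtain t where t: "M = a + t" unfolding mdvd_def by blast
    have "(\<Sum>m\<in>keys p. (c * lookup p m when a + m = M)) = (\<Sum>m\<in>keys p. (c * lookup p m when m = t))"
      using t by (intro sum.cong) (auto simp: when_def)
    also have "\<dots> = c * lookup p t"
      by (auto simp: when_def in_keys_iff)
    finally show ?thesis using True t by simp
  next
    case False
    then have "\<And>m. a + m \<noteq> M" unfolding mdvd_def by metis
    then show ?thesis using False by simp
  qed
  finally show ?thesis .
qed

lemma lookup_smult_mp[simp]: "lookup (smult_mp c p) k = c * lookup p k"
  by (simp add: smult_mp_def map.rep_eq when_def)

lemma smult_mp_eq_mult: "smult_mp c p = single 0 c * p"
  by (simp add: smult_mp_def mult_map_scale_conv_mult)

abbreviation proj :: "'x monom set \<Rightarrow> ('x, 'k::comm_ring_1) mpoly \<Rightarrow> ('x, 'k) mpoly" where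
  "proj G \<equiv> qproj (mon_ideal G)"

lemma single_in_mon_ideal: "(single m 1 :: ('x, 'k::comm_ring_1) mpoly) \<in> mon_ideal G \<longleftrightarrow> mon_in G m"
  by (simp add: mem_mon_ideal)

lemma lookup_proj: "lookup (proj G p) M = (if mon_in G M then 0 else lookup p M)"
proof -
  have "lookup (proj G p) M = (\<Sum>m\<in>{m \<in> keys p. \<not> mon_in G m}. (lookup p m when m = M))"
    unfolding qproj_def by (simp add: lookup_sum lookup_single single_in_mon_ideal when_def eq_commute)
  also have "\<dots> = (if mon_in G M then 0 else lookup p M)"
    by (auto simp: when_def in_keys_iff)
  finally show ?thesis .
qed

lemma proj_add: "proj G (p + q) = proj G p + proj G q"
  by (rule poly_mapping_eqI) (simp add: lookup_proj lookup_add)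

lemma proj_zero [simp]: "proj G 0 = 0"
  by (rule poly_mapping_eqI) (simp add: lookup_proj)

lemma proj_sum: "proj G (\<Sum>i\<in>A. f i) = (\<Sum>i\<in>A. proj G (f i))"
  by (rule poly_mapping_eqI) (simp add: lookup_proj lookup_sum)

lemma proj_smult: "proj G (single 0 c * p) = single 0 c * proj G p"
  by (rule poly_mapping_eqI) (simp add: lookup_proj lookup_single_mult mdvd_def)

lemma proj_eq_zero: "(\<And>m. m \<in> keys p \<Longrightarrow> mon_in G m) \<Longrightarrow> proj G p = 0"
  by (rule poly_mapping_eqI) (auto simp: lookup_proj in_keys_iff)

lemma proj_mult_eq_zero:
  assumes "\<And>m. m \<in> keys p \<Longrightarrow> mon_in G m"
  shows "proj G (r * p) = 0"
proof (rule proj_eq_zero)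
  fix m assume "m \<in> keys (r * p)"
  then obtain a b where "m = a + b" "b \<in> keys p" using keys_mult[of r p] by auto
  then show "mon_in G m" using assms mon_in_add_left by auto
qed

lemma proj_mult_mdvd_eq_zero:
  assumes "h \<in> G" "mdvd h r"
  shows "proj G (single r c * p) = 0"
proof (rule proj_eq_zero)
  fix m assume "m \<in> keys (single r c * p)"
  then obtain b where "m = r + b" using keys_single_mult by blast
  then have "mdvd h m" using assms(2) mdvd_add_left[of h r b] by (simp add: add.commute)
  then show "mon_in G m" using assms(1) mon_in_def by blast
qed

lemma proj_mult_proj: "proj G (r * proj G p) = proj G (r * p)"
proof -
  have "p = proj G p + (p - proj G p)" by simp
  then have "r * p = r * proj G p + r * (p - proj G p)" by (metis distrib_left)
  moreover have "proj G (r * (p - proj G p)) = 0"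
    by (rule proj_mult_eq_zero) (auto simp: in_keys_iff lookup_minus lookup_proj split: if_splits)
  ultimately show ?thesis by (simp add: proj_add)
qed

lemma proj_eq_self_iff: "proj G p = p \<longleftrightarrow> (\<forall>m\<in>keys p. \<not> mon_in G m)"
proof
  assume "proj G p = p"
  then show "\<forall>m\<in>keys p. \<not> mon_in G m" by (metis in_keys_iff lookup_proj)
next
  assume "\<forall>m\<in>keys p. \<not> mon_in G m"
  then show "proj G p = p" by (intro poly_mapping_eqI) (auto simp: lookup_proj in_keys_iff)
qed

lemma proj_single: "proj G (single m c) = (if mon_in G m then 0 else single m c)"
  by (rule poly_mapping_eqI) (auto simp: lookup_proj lookup_single when_def)

lemma sum_apply: "(\<Sum>i\<in>A. f i) x = (\<Sum>i\<in>A. f i x)"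
  by (induction A rule: infinite_finite_induct) auto

lemma mdeg_add: "mdeg (a + b) = mdeg a + mdeg b"
  by (auto simp: mdeg_def fun_eq_iff lookup_add)

lemma mdeg_diff: "mdvd g m \<Longrightarrow> mdeg (m - g) + mdeg g = mdeg m"
  using mdeg_add[of "m - g" g] mdvd_diff_add[of g m] by simp

definition some_gen :: "'x monom set \<Rightarrow> 'x monom \<Rightarrow> 'x monom" where
  "some_gen G m = (SOME g. g \<in> G \<and> mdvd g m)"

lemma some_gen_mdvd: "mon_in G m \<Longrightarrow> some_gen G m \<in> G \<and> mdvd (some_gen G m) m"
  unfolding some_gen_def mon_in_def by (rule someI_ex) blast

definition ext_mon :: "'x monom set \<Rightarrow> ('x monom \<Rightarrow> ('x, 'k::comm_ring_1) mpoly) \<Rightarrow> 'x monom \<Rightarrow> ('x, 'k) mpoly" where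
  "ext_mon G \<psi> m = proj G (single (m - some_gen G m) 1 * \<psi> (some_gen G m))"

definition extend :: "'x monom set \<Rightarrow> ('x monom \<Rightarrow> ('x, 'k::comm_ring_1) mpoly) \<Rightarrow> ('x, 'k) mpoly \<Rightarrow> ('x, 'k) mpoly" where
  "extend G \<psi> p = (if p \<in> mon_ideal G then (\<Sum>m\<in>keys p. single 0 (lookup p m) * ext_mon G \<psi> m) else 0)"

definition compatible :: "'x monom set \<Rightarrow> ('x monom \<Rightarrow> ('x, 'k::comm_ring_1) mpoly) \<Rightarrow> bool" where
  "compatible G \<psi> \<longleftrightarrow> (\<forall>g\<in>G. proj G (\<psi> g) = \<psi> g \<and> homogeneous (mdeg g) (\<psi> g)) \<and>
     (\<forall>g\<in>G. \<forall>h\<in>G. \<forall>m. mdvd g m \<longrightarrow> mdvd h m \<longrightarrow> proj G (single (m - g) 1 * \<psi> g) = proj G (single (m - h) 1 * \<psi> h))"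

lemma compatible_syzygy: "compatible G \<psi> \<Longrightarrow> g \<in> G \<Longrightarrow> h \<in> G \<Longrightarrow> mdvd g m \<Longrightarrow> mdvd h m \<Longrightarrow>
   proj G (single (m - g) 1 * \<psi> g) = proj G (single (m - h) 1 * \<psi> h)"
  unfolding compatible_def by blast

lemma compatible_proj: "compatible G \<psi> \<Longrightarrow> g \<in> G \<Longrightarrow> proj G (\<psi> g) = \<psi> g"
  unfolding compatible_def by blast

lemma compatible_homogeneous: "compatible G \<psi> \<Longrightarrow> g \<in> G \<Longrightarrow> homogeneous (mdeg g) (\<psi> g)"
  unfolding compatible_def by blast

lemma ext_mon_eq: "compatible G \<psi> \<Longrightarrow> g \<in> G \<Longrightarrow> mdvd g m \<Longrightarrow> ext_mon G \<psi> m = proj G (single (m - g) 1 * \<psi> g)"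
proof -
  assume a: "compatible G \<psi>" "g \<in> G" "mdvd g m"
  then have "mon_in G m" unfolding mon_in_def by blast
  then have "some_gen G m \<in> G" "mdvd (some_gen G m) m" using some_gen_mdvd by auto
  then show ?thesis unfolding ext_mon_def using compatible_syzygy[OF a(1) _ a(2) _ a(3)] by blast
qed

lemma ext_mon_shift:
  assumes c: "compatible G \<psi>" and m: "mon_in G m"
  shows "ext_mon G \<psi> (t + m) = proj G (single t 1 * ext_mon G \<psi> m)"
proof -
  obtain g where g: "g \<in> G" "mdvd g m" using m mon_in_def by blast
  have "ext_mon G \<psi> (t + m) = proj G (single (t + m - g) 1 * \<psi> g)"
    using ext_mon_eq[OF c g(1) mdvd_add_left[OF g(2)]] .
  also have "\<dots> = proj G (single t 1 * (single (m - g) 1 * \<psi> g))"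
    using mdvd_diff_assoc[OF g(2)] by (simp add: mult_single mult.assoc[symmetric])
  also have "\<dots> = proj G (single t 1 * ext_mon G \<psi> m)"
    unfolding ext_mon_eq[OF c g] proj_mult_proj ..
  finally show ?thesis .
qed

lemma mon_ideal_add: "p \<in> mon_ideal G \<Longrightarrow> q \<in> mon_ideal G \<Longrightarrow> (p + q :: ('x,'k::comm_ring_1) mpoly) \<in> mon_ideal G"
  using keys_add[of p q] by (auto simp: mem_mon_ideal)

lemma mon_ideal_mult: "p \<in> mon_ideal G \<Longrightarrow> (r * p :: ('x,'k::comm_ring_1) mpoly) \<in> mon_ideal G"
  using keys_mult[of r p] mon_in_add_left by (fastforce simp: mem_mon_ideal)

lemma mon_ideal_zero: "(0 :: ('x,'k::comm_ring_1) mpoly) \<in> mon_ideal G" by (simp add: mem_mon_ideal)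

lemma mon_ideal_sum: "(\<And>i. i \<in> A \<Longrightarrow> f i \<in> mon_ideal G) \<Longrightarrow> (\<Sum>i\<in>A. f i :: ('x,'k::comm_ring_1) mpoly) \<in> mon_ideal G"
  by (induction A rule: infinite_finite_induct) (auto intro: mon_ideal_add mon_ideal_zero)

lemma extend_eq_sum:
  assumes "p \<in> mon_ideal G" "finite M" "keys p \<subseteq> M"
  shows "extend G \<psi> p = (\<Sum>m\<in>M. single 0 (lookup p m) * ext_mon G \<psi> m)"
  unfolding extend_def using assms by (auto intro!: sum.mono_neutral_left simp: in_keys_iff)

lemma extend_add:
  assumes "p \<in> mon_ideal G" "q \<in> mon_ideal G"
  shows "extend G \<psi> (p + q) = extend G \<psi> p + extend G \<psi> q"
proof -
  let ?M = "keys p \<union> keys q"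
  have "extend G \<psi> (p + q) = (\<Sum>m\<in>?M. single 0 (lookup (p + q) m) * ext_mon G \<psi> m)"
    using extend_eq_sum[OF mon_ideal_add[OF assms]] keys_add[of p q] by auto
  also have "\<dots> = (\<Sum>m\<in>?M. single 0 (lookup p m) * ext_mon G \<psi> m) + (\<Sum>m\<in>?M. single 0 (lookup q m) * ext_mon G \<psi> m)"
    by (simp add: lookup_add single_add distrib_right sum.distrib)
  also have "\<dots> = extend G \<psi> p + extend G \<psi> q"
    using extend_eq_sum[OF assms(1), of ?M] extend_eq_sum[OF assms(2), of ?M] by simp
  finally show ?thesis .
qed

lemma extend_zero [simp]: "extend G \<psi> 0 = 0"
  by (simp add: extend_def)

lemma extend_sum:
  assumes "\<And>i. i \<in> A \<Longrightarrow> f i \<in> mon_ideal G"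
  shows "extend G \<psi> (\<Sum>i\<in>A. f i) = (\<Sum>i\<in>A. extend G \<psi> (f i))"
  using assms
proof (induction A rule: infinite_finite_induct)
  case (insert x F)
  have "(\<Sum>i\<in>F. f i) \<in> mon_ideal G"
    using insert by (intro mon_ideal_sum) auto
  then show ?case using insert extend_add[of "f x" G "\<Sum>i\<in>F. f i"] by auto
qed auto

lemma extend_single_mult:
  assumes c: "compatible G \<psi>" and p: "p \<in> mon_ideal G"
  shows "extend G \<psi> (single a c * p) = proj G (single a c * extend G \<psi> p)"
proof -
  have mon_in: "\<And>m. m \<in> keys p \<Longrightarrow> mon_in G m" using p mem_mon_ideal by blast
  have ap: "single a c * p \<in> mon_ideal G" using mon_ideal_mult[OF p] .
  have inj: "inj_on ((+) a) (keys p)" by (auto simp: inj_on_def)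
  have "extend G \<psi> (single a c * p) = (\<Sum>M\<in>(+) a ` keys p. single 0 (lookup (single a c * p) M) * ext_mon G \<psi> M)"
    by (rule extend_eq_sum[OF ap]) (auto simp: keys_single_mult)
  also have "\<dots> = (\<Sum>m\<in>keys p. single 0 (c * lookup p m) * ext_mon G \<psi> (a + m))"
    by (simp add: sum.reindex[OF inj] lookup_single_mult)
  also have "\<dots> = (\<Sum>m\<in>keys p. proj G (single a c * (single 0 (lookup p m) * ext_mon G \<psi> m)))"
  proof (intro sum.cong refl)
    fix m assume "m \<in> keys p"
    then have "ext_mon G \<psi> (a + m) = proj G (single a 1 * ext_mon G \<psi> m)" using ext_mon_shift[OF c] mon_in by blast
    moreover have "single a c * (single 0 (lookup p m) * ext_mon G \<psi> m) = single 0 (c * lookup p m) * (single a 1 * ext_mon G \<psi> m)"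
      by (simp add: mult.assoc[symmetric] mult_single)
    ultimately show "single 0 (c * lookup p m) * ext_mon G \<psi> (a + m) = proj G (single a c * (single 0 (lookup p m) * ext_mon G \<psi> m))"
      by (simp add: proj_smult)
  qed
  also have "\<dots> = proj G (single a c * extend G \<psi> p)"
    using p by (simp add: extend_def proj_sum sum_distrib_left)
  finally show ?thesis .
qed

lemma extend_mult:
  assumes c: "compatible G \<psi>" and p: "p \<in> mon_ideal G"
  shows "extend G \<psi> (r * p) = proj G (r * extend G \<psi> p)"
proof -
  have "r * p = (\<Sum>a\<in>keys r. single a (lookup r a)) * p"
    using poly_mapping_sum_single[of r] by simp
  then have "r * p = (\<Sum>a\<in>keys r. single a (lookup r a) * p)"
    by (simp add: sum_distrib_right)
  then have "extend G \<psi> (r * p) = (\<Sum>a\<in>keys r. extend G \<psi> (single a (lookup r a) * p))"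
    using extend_sum[of "keys r" "\<lambda>a. single a (lookup r a) * p"] mon_ideal_mult[OF p] by simp
  also have "\<dots> = (\<Sum>a\<in>keys r. proj G (single a (lookup r a) * extend G \<psi> p))"
    using extend_single_mult[OF c p] by simp
  also have "\<dots> = proj G ((\<Sum>a\<in>keys r. single a (lookup r a)) * extend G \<psi> p)"
    by (simp add: proj_sum sum_distrib_right)
  also have "\<dots> = proj G (r * extend G \<psi> p)"
    using poly_mapping_sum_single[of r] by simp
  finally show ?thesis .
qed

lemma keys_ext_mon: "M \<in> keys (ext_mon G \<psi> m) \<Longrightarrow> \<not> mon_in G M"
  unfolding ext_mon_def by (auto simp: in_keys_iff lookup_proj)

lemma keys_extend: "M \<in> keys (extend G \<psi> p) \<Longrightarrow> \<exists>m\<in>keys p. M \<in> keys (ext_mon G \<psi> m)"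
proof -
  assume M: "M \<in> keys (extend G \<psi> p)"
  then have "p \<in> mon_ideal G" by (auto simp: extend_def split: if_splits)
  then have "M \<in> keys (\<Sum>m\<in>keys p. single 0 (lookup p m) * ext_mon G \<psi> m)" using M by (simp add: extend_def)
  then obtain m where m: "m \<in> keys p" "M \<in> keys (single 0 (lookup p m) * ext_mon G \<psi> m)"
    using keys_sum[of "\<lambda>m. single 0 (lookup p m) * ext_mon G \<psi> m" "keys p"] by blast
  have "M \<in> keys (ext_mon G \<psi> m)" using m(2) keys_single_mult[of 0 "lookup p m" "ext_mon G \<psi> m"] by auto
  then show ?thesis using m(1) by blast
qed

lemma extend_homogeneous:
  assumes c: "compatible G \<psi>" and p: "p \<in> mon_ideal G" and h: "homogeneous u p"
  shows "homogeneous u (extend G \<psi> p)"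
  unfolding homogeneous_def
proof
  fix M assume "M \<in> keys (extend G \<psi> p)"
  then obtain m where m: "m \<in> keys p" "M \<in> keys (ext_mon G \<psi> m)" using keys_extend by blast
  have mu: "mdeg m = u" using h m(1) by (simp add: homogeneous_def)
  have "mon_in G m" using p m(1) mem_mon_ideal by blast
  then have g: "some_gen G m \<in> G" "mdvd (some_gen G m) m" using some_gen_mdvd by auto
  have "M \<in> keys (single (m - some_gen G m) 1 * \<psi> (some_gen G m))"
    using m(2) unfolding ext_mon_def by (auto simp: in_keys_iff lookup_proj split: if_splits)
  then obtain b where b: "M = (m - some_gen G m) + b" "b \<in> keys (\<psi> (some_gen G m))"
    using keys_single_mult by blast
  have "mdeg b = mdeg (some_gen G m)" using compatible_homogeneous[OF c g(1)] b(2) by (simp add: homogeneous_def)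
  then show "mdeg M = u" using b(1) mdeg_add[of "m - some_gen G m" b] mdeg_diff[OF g(2)] mu by simp
qed

lemma extend_in_tangent_hom:
  assumes c: "compatible G \<psi>"
  shows "extend G \<psi> \<in> tangent_hom (mon_ideal G :: ('x, 'k::comm_ring_1) mpoly set)"
  unfolding tangent_hom_def
proof (intro CollectI conjI allI ballI impI)
  fix p :: "('x,'k) mpoly" assume "p \<notin> mon_ideal G" then show "extend G \<psi> p = 0" by (simp add: extend_def)
next
  fix p :: "('x,'k) mpoly" assume "p \<in> mon_ideal G"
  show "proj G (extend G \<psi> p) = extend G \<psi> p"
    unfolding proj_eq_self_iff using keys_extend keys_ext_mon by blast
next
  fix p q :: "('x,'k) mpoly" assume "p \<in> mon_ideal G" "q \<in> mon_ideal G"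
  then show "extend G \<psi> (p + q) = extend G \<psi> p + extend G \<psi> q" by (rule extend_add)
next
  fix r p :: "('x,'k) mpoly" assume "p \<in> mon_ideal G"
  then show "extend G \<psi> (r * p) = proj G (r * extend G \<psi> p)" using extend_mult[OF c] by blast
next
  fix u p assume "p \<in> mon_ideal G" "homogeneous u (p :: ('x,'k) mpoly)"
  then show "homogeneous u (extend G \<psi> p)" using extend_homogeneous[OF c] by blast
qed

lemma homogeneous_single: "homogeneous (mdeg g) (single g (1::'k::zero_neq_one))"
  by (simp add: homogeneous_def)

lemma tangent_homD:
  assumes "\<phi> \<in> tangent_hom I"
  shows "p \<notin> I \<Longrightarrow> \<phi> p = 0"
    and "p \<in> I \<Longrightarrow> qproj I (\<phi> p) = \<phi> p"
    and "p \<in> I \<Longrightarrow> q \<in> I \<Longrightarrow> \<phi> (p + q) = \<phi> p + \<phi> q"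
    and "p \<in> I \<Longrightarrow> \<phi> (r * p) = qproj I (r * \<phi> p)"
    and "p \<in> I \<Longrightarrow> homogeneous u p \<Longrightarrow> homogeneous u (\<phi> p)"
  using assms unfolding tangent_hom_def by blast+

lemma tangent_hom_single:
  assumes "\<phi> \<in> tangent_hom (mon_ideal G :: ('x, 'k::comm_ring_1) mpoly set)" "g \<in> G" "mdvd g m"
  shows "\<phi> (single m c) = proj G (single (m - g) c * \<phi> (single g 1))"
proof -
  have "single m c = single (m - g) c * single g (1::'k)"
    using mdvd_diff_add[OF assms(3)] by (simp add: mult_single)
  moreover have "single g (1::'k) \<in> mon_ideal G"
    using assms(2) mon_in_gen by (simp add: single_in_mon_ideal)
  ultimately show ?thesis using tangent_homD(4)[OF assms(1)] by simp
qed

lemma tangent_hom_sum: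
  assumes "\<phi> \<in> tangent_hom (mon_ideal G :: ('x, 'k::comm_ring_1) mpoly set)"
    and "\<And>i. i \<in> A \<Longrightarrow> f i \<in> mon_ideal G"
  shows "\<phi> (\<Sum>i\<in>A. f i) = (\<Sum>i\<in>A. \<phi> (f i))"
  using assms(2)
proof (induction A rule: infinite_finite_induct)
  case (insert x F)
  have "(\<Sum>i\<in>F. f i) \<in> mon_ideal G" using insert by (intro mon_ideal_sum) auto
  then show ?case using insert tangent_homD(3)[OF assms(1), of "f x"] by auto
qed (use tangent_homD(4)[OF assms(1) mon_ideal_zero, of 0] in auto)

lemma compatible_tangent_hom:
  assumes "\<phi> \<in> tangent_hom (mon_ideal G :: ('x, 'k::comm_ring_1) mpoly set)"
  shows "compatible G (\<lambda>g. \<phi> (single g 1))"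
  unfolding compatible_def
proof (intro conjI ballI allI impI)
  fix g assume "g \<in> G"
  then have "single g (1::'k) \<in> mon_ideal G"
    using mon_in_gen by (simp add: single_in_mon_ideal)
  then show "proj G (\<phi> (single g 1)) = \<phi> (single g 1)" "homogeneous (mdeg g) (\<phi> (single g 1))"
    using tangent_homD(2,5)[OF assms] homogeneous_single by auto
next
  fix g h m assume "g \<in> G" "h \<in> G" "mdvd g m" "mdvd h m"
  then show "proj G (single (m - g) 1 * \<phi> (single g 1)) = proj G (single (m - h) 1 * \<phi> (single h 1))"
    using tangent_hom_single[OF assms, of g m 1] tangent_hom_single[OF assms, of h m 1] by simp
qed

lemma extend_tangent_hom:
  assumes "\<phi> \<in> tangent_hom (mon_ideal G :: ('x, 'k::comm_ring_1) mpoly set)"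
  shows "extend G (\<lambda>g. \<phi> (single g 1)) = \<phi>"
proof
  fix p :: "('x, 'k) mpoly"
  show "extend G (\<lambda>g. \<phi> (single g 1)) p = \<phi> p"
  proof (cases "p \<in> mon_ideal G")
    case False
    then show ?thesis using tangent_homD(1)[OF assms] by (simp add: extend_def)
  next
    case True
    have ki: "\<And>m. m \<in> keys p \<Longrightarrow> mon_in G m" using True mem_mon_ideal by blast
    have "\<phi> p = \<phi> (\<Sum>m\<in>keys p. single m (lookup p m))"
      using poly_mapping_sum_single[of p] by simp
    also have "\<dots> = (\<Sum>m\<in>keys p. \<phi> (single m (lookup p m)))"
      by (rule tangent_hom_sum[OF assms]) (simp add: mem_mon_ideal ki)
    also have "\<dots> = (\<Sum>m\<in>keys p. single 0 (lookup p m) * ext_mon G (\<lambda>g. \<phi> (single g 1)) m)"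
    proof (intro sum.cong refl)
      fix m assume "m \<in> keys p"
      then have g: "some_gen G m \<in> G" "mdvd (some_gen G m) m" using some_gen_mdvd ki by auto
      have "single (m - some_gen G m) (lookup p m)
          = single 0 (lookup p m) * single (m - some_gen G m) (1::'k)"
        by (simp add: mult_single)
      then show "\<phi> (single m (lookup p m)) = single 0 (lookup p m) * ext_mon G (\<lambda>g. \<phi> (single g 1)) m"
        unfolding tangent_hom_single[OF assms g] ext_mon_def by (simp add: proj_smult mult.assoc)
    qed
    finally show ?thesis using True by (simp add: extend_def)
  qed
qed

lemma extend_gen:
  fixes \<psi> :: "'x monom \<Rightarrow> ('x, 'k::comm_ring_1) mpoly"
  assumes "compatible G \<psi>" "g \<in> G"
  shows "extend G \<psi> (single g 1) = \<psi> g"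
proof -
  have "mon_in G g" unfolding mon_in_def using assms(2) mdvd_refl by blast
  then have i: "single g (1::'k) \<in> mon_ideal G" by (simp add: mem_mon_ideal)
  have "extend G \<psi> (single g 1) = ext_mon G \<psi> g" using i by (simp add: extend_def)
  also have "\<dots> = proj G (single (g - g) 1 * \<psi> g)" using ext_mon_eq[OF assms mdvd_refl] .
  also have "\<dots> = \<psi> g" using compatible_proj[OF assms] by simp
  finally show ?thesis .
qed

lemma extend_cong:
  assumes "\<And>g. g \<in> G \<Longrightarrow> \<psi> g = \<psi>' g"
  shows "extend G \<psi> = extend G \<psi>'"
proof
  fix p
  show "extend G \<psi> p = extend G \<psi>' p"
  proof (cases "p \<in> mon_ideal G")
    case True
    have "ext_mon G \<psi> m = ext_mon G \<psi>' m" if "m \<in> keys p" for m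
    proof -
      have "mon_in G m" using that True mem_mon_ideal by blast
      then have "some_gen G m \<in> G" using some_gen_mdvd by blast
      then show ?thesis using assms unfolding ext_mon_def by simp
    qed
    then show ?thesis using True unfolding extend_def by (simp cong: sum.cong)
  qed (simp add: extend_def)
qed

lemma ext_mon_linear:
  "ext_mon G (\<lambda>g. \<Sum>d\<in>F. single 0 (a d) * \<psi> d g) m = (\<Sum>d\<in>F. single 0 (a d) * ext_mon G (\<psi> d) m)"
  unfolding ext_mon_def by (simp add: sum_distrib_left proj_sum mult.left_commute proj_smult)

lemma extend_linear:
  "extend G (\<lambda>g. \<Sum>d\<in>F. single 0 (a d) * \<psi> d g) p = (\<Sum>d\<in>F. single 0 (a d) * extend G (\<psi> d) p)"
proof (cases "p \<in> mon_ideal G")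
  case True
  then show ?thesis
    by (simp add: extend_def ext_mon_linear sum_distrib_left mult.left_commute sum.swap[of _ F])
qed (simp add: extend_def)

lemma vector_space_pointwise: "vector_space (\<lambda>(c::'k::field) (\<phi> :: ('x,'k) mpoly \<Rightarrow> ('x,'k) mpoly) p. smult_mp c (\<phi> p))"
  by unfold_locales (auto simp: fun_eq_iff poly_mapping_eq_iff lookup_add algebra_simps)

lemma (in vector_space) dim_eq_card_dual_basis:
  fixes b :: "'i \<Rightarrow> 'b" and f :: "'i \<Rightarrow> 'b \<Rightarrow> 'a"
  assumes "b ` D \<subseteq> T" "T \<subseteq> span (b ` D)"
    and f_dual: "\<And>d d'. d \<in> D \<Longrightarrow> d' \<in> D \<Longrightarrow> f d (b d') = (if d = d' then 1 else 0)"
    and f_linear: "\<And>d t u. f d (\<Sum>v\<in>t. scale (u v) v) = (\<Sum>v\<in>t. u v * f d v)"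
  shows "dim T = card D"
proof -
  have inj: "inj_on b D"
    by (rule inj_onI) (metis f_dual zero_neq_one)
  have "independent (b ` D)"
    unfolding dependent_explicit
  proof
    assume "\<exists>t u. finite t \<and> t \<subseteq> b ` D \<and> (\<Sum>v\<in>t. scale (u v) v) = 0 \<and> (\<exists>v\<in>t. u v \<noteq> 0)"
    then obtain t u d0 where t: "finite t" "t \<subseteq> b ` D" "(\<Sum>v\<in>t. scale (u v) v) = 0"
      and d0: "d0 \<in> D" "b d0 \<in> t" "u (b d0) \<noteq> 0"
      by blast
    have "(\<Sum>v\<in>t. u v * f d0 v) = (\<Sum>v\<in>t. if v = b d0 then u v else 0)"
    proof (rule sum.cong[OF refl])
      fix v assume "v \<in> t"
      then obtain d where "d \<in> D" "v = b d" using t by blast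
      then show "u v * f d0 v = (if v = b d0 then u v else 0)"
        using f_dual[OF d0(1)] inj d0(1) inj_on_eq_iff by fastforce
    qed
    also have "\<dots> = u (b d0)" using t d0 by simp
    finally have "f d0 (\<Sum>v\<in>t. scale (u v) v) = u (b d0)" using f_linear by simp
    moreover have "f d0 0 = 0" using f_linear[where t = "{}"] by simp
    ultimately show False using t(3) d0(3) by simp
  qed
  moreover have "span (b ` D) = span T"
    unfolding span_eq using assms(1,2) span_superset by blast
  ultimately have "dim T = card (b ` D)" using dim_eq_card by blast
  also have "\<dots> = card D" using card_image[OF inj] .
  finally show ?thesis .
qed

section \<open>The ideal I_T and its syzygies\<close>

fun opp_var :: "'e var \<Rightarrow> 'e var" where
  "opp_var (X e) = Y e" | "opp_var (Y e) = X e"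

fun var_edge :: "'e var \<Rightarrow> 'e" where
  "var_edge (X e) = e" | "var_edge (Y e) = e"

lemma opp_var_neq [simp]: "opp_var x \<noteq> x" "x \<noteq> opp_var x"
  by (cases x; simp)+

lemma var_edge_opp_var [simp]: "var_edge (opp_var x) = var_edge x"
  by (cases x) auto

lemma opp_var_opp_var [simp]: "opp_var (opp_var x) = x"
  by (cases x) auto

lemma var_cases: "var_edge x = var_edge y \<Longrightarrow> x = y \<or> x = opp_var y"
  by (cases x; cases y) auto

definition mvar :: "'e var \<Rightarrow> 'e monom" where
  "mvar x = single x 1"

lemma lookup_mvar: "lookup (mvar x) y = (if x = y then 1 else 0)"
  by (simp add: mvar_def lookup_single)

lemma mdeg_mvar: "mdeg (mvar x) = (\<lambda>e. if var_edge x = e then 1 else 0)"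
  by (cases x) (auto simp: mdeg_def lookup_mvar fun_eq_iff)

lemma mvar_pair_eq:
  assumes "var_edge x \<noteq> var_edge y" "mvar x + mvar y = mvar x' + mvar y'"
  shows "(x = x' \<and> y = y') \<or> (x = y' \<and> y = x')"
proof -
  have xy: "x \<noteq> y" using assms(1) by auto
  have l: "\<And>z. lookup (mvar x + mvar y) z = lookup (mvar x' + mvar y') z" using assms(2) by simp
  have "x = x' \<or> x = y'" using l[of x] xy by (auto simp: lookup_add lookup_mvar split: if_splits)
  moreover have "y = x' \<or> y = y'" using l[of y] xy by (auto simp: lookup_add lookup_mvar split: if_splits)
  ultimately show ?thesis using xy by auto
qed

lemma mdvd_mvar_pair_iff:
  assumes "x \<noteq> y"
  shows "mdvd (mvar x + mvar y) M \<longleftrightarrow> lookup M x \<ge> 1 \<and> lookup M y \<ge> 1"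
proof
  assume "mdvd (mvar x + mvar y) M"
  then have "lookup (mvar x + mvar y) x \<le> lookup M x" "lookup (mvar x + mvar y) y \<le> lookup M y"
    unfolding mdvd_iff_lookup by blast+
  then show "lookup M x \<ge> 1 \<and> lookup M y \<ge> 1"
    using assms by (simp add: lookup_add lookup_mvar)
next
  assume "lookup M x \<ge> 1 \<and> lookup M y \<ge> 1"
  then show "mdvd (mvar x + mvar y) M"
    unfolding mdvd_iff_lookup using assms by (auto simp: lookup_add lookup_mvar)
qed

lemma pvar_mult: "pvar x * pvar y = (single (mvar x + mvar y) 1 :: ('e, 'k::comm_ring_1) mpoly)"
  by (simp add: pvar_def mvar_def mult_single)

lemma card_offdiag:
  assumes "finite A"
  shows "card {(i, j). i \<in> A \<and> j \<in> A \<and> i \<noteq> j} = card A * (card A - 1)"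
proof -
  have "{(i, j). i \<in> A \<and> j \<in> A \<and> i \<noteq> j} = A \<times> A - (\<lambda>x. (x, x)) ` A" by auto
  moreover have "card ((\<lambda>x. (x, x)) ` A) = card A" by (rule card_image) (auto simp: inj_on_def)
  ultimately show ?thesis
    using assms by (simp add: card_Diff_subset card_cartesian_product diff_mult_distrib2 image_subset_iff)
qed

lemma f_loc_eq: "f_loc d = d * (d - 1) + (if d = 2 then 1 else 0)"
  by (cases "d \<le> 3") (auto simp: f_loc_def numeral_eq_Suc le_Suc_eq)

context tree
begin

abbreviation Z :: "'e \<Rightarrow> 'e \<Rightarrow> 'e var" where
  "Z \<equiv> zvar tail head"

definition W :: "'e \<Rightarrow> 'e \<Rightarrow> 'e var" where
  "W i j = opp_var (Z i j)"

lemma Z_eq_if: "Z i j = (if closer i j then X j else Y j)"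
  by (simp add: zvar_def)

lemma var_edge_Z [simp]: "var_edge (Z i j) = j"
  by (simp add: Z_eq_if)

lemma var_edge_W [simp]: "var_edge (W i j) = j"
  by (simp add: W_def)

lemma Z_eq_Z_iff: "Z a b = Z c b \<longleftrightarrow> closer a b = closer c b"
  by (simp add: Z_eq_if)

lemma Z_eq_W_iff [simp]: "Z a b = W c b \<longleftrightarrow> Z a b \<noteq> Z c b"
  by (simp add: W_def Z_eq_if)

lemma W_eq_Z_iff [simp]: "W c b = Z a b \<longleftrightarrow> Z a b \<noteq> Z c b"
  by (auto simp: W_def Z_eq_if)

lemma Z_neq_Z: "b \<noteq> d \<Longrightarrow> Z a b \<noteq> Z c d"
  using var_edge_Z by metis

lemma W_neq_Z: "b \<noteq> d \<Longrightarrow> W a b \<noteq> Z c d"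
  using var_edge_Z var_edge_W by metis

lemma var_Z_or_W: "var_edge x = b \<Longrightarrow> x = Z a b \<or> x = W a b"
  using var_cases[of x "Z a b"] by (auto simp: W_def)

text \<open>The monomials of multidegree e_i + e_j are zz i j (the generator of I_T), the two
  monomials wz i j, wz j i and ww i j; the last three are standard.\<close>

definition zz :: "'e \<Rightarrow> 'e \<Rightarrow> 'e monom" where
  "zz i j = mvar (Z i j) + mvar (Z j i)"

definition wz :: "'e \<Rightarrow> 'e \<Rightarrow> 'e monom" where
  "wz i j = mvar (W j i) + mvar (Z i j)"

definition ww :: "'e \<Rightarrow> 'e \<Rightarrow> 'e monom" where
  "ww i j = mvar (W j i) + mvar (W i j)"

definition gens :: "'e monom set" where
  "gens = {zz i j | i j. i \<noteq> j}"

lemma zz_commute: "zz i j = zz j i"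
  by (simp add: zz_def add.commute)

lemma ww_commute: "ww i j = ww j i"
  by (simp add: ww_def add.commute)

lemma zz_in_gens: "a \<noteq> b \<Longrightarrow> zz a b \<in> gens"
  unfolding gens_def by blast

lemma I_T_eq_mon_ideal: "I_T tail head = (mon_ideal gens :: ('e, 'k::comm_ring_1) mpoly set)"
proof -
  have "{pvar (Z i j) * pvar (Z j i) | i j. i \<noteq> j} = {single (zz i j) (1::'k) | i j. i \<noteq> j}"
    by (simp add: pvar_mult zz_def)
  also have "\<dots> = (\<lambda>g. single g (1::'k)) ` gens"
    unfolding gens_def by blast
  finally show ?thesis by (simp add: I_T_def mon_ideal_def)
qed

definition gen_pair :: "'e var \<Rightarrow> 'e var \<Rightarrow> bool" where
  "gen_pair u v \<longleftrightarrow> var_edge u \<noteq> var_edge v \<and> Z (var_edge v) (var_edge u) = u \<and> Z (var_edge u) (var_edge v) = v"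

lemma mon_in_gens_iff:
  "mon_in gens M \<longleftrightarrow> (\<exists>u v. gen_pair u v \<and> lookup M u \<ge> 1 \<and> lookup M v \<ge> 1)"
proof
  assume "mon_in gens M"
  then obtain a b where ab: "a \<noteq> b" "mdvd (zz a b) M" unfolding mon_in_def gens_def by blast
  then have "lookup M (Z a b) \<ge> 1 \<and> lookup M (Z b a) \<ge> 1"
    using mdvd_mvar_pair_iff Z_neq_Z unfolding zz_def by metis
  then show "\<exists>u v. gen_pair u v \<and> lookup M u \<ge> 1 \<and> lookup M v \<ge> 1"
    using ab(1) by (intro exI[of _ "Z a b"] exI[of _ "Z b a"]) (auto simp: gen_pair_def)
next
  assume "\<exists>u v. gen_pair u v \<and> lookup M u \<ge> 1 \<and> lookup M v \<ge> 1"
  then obtain a b where ab: "a \<noteq> b" "lookup M (Z a b) \<ge> 1" "lookup M (Z b a) \<ge> 1"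
    unfolding gen_pair_def by (metis var_edge_Z)
  then have "mdvd (zz a b) M" using mdvd_mvar_pair_iff Z_neq_Z unfolding zz_def by metis
  then show "mon_in gens M" unfolding mon_in_def gens_def using ab(1) by blast
qed

lemma mon_in_gens_2:
  assumes "var_edge u \<noteq> var_edge v"
  shows "mon_in gens (mvar u + mvar v) \<longleftrightarrow> gen_pair u v"
  unfolding mon_in_gens_iff using assms by (auto simp: lookup_add lookup_mvar gen_pair_def)

lemma mon_in_gens_3:
  assumes "var_edge u \<noteq> var_edge v" "var_edge u \<noteq> var_edge w" "var_edge v \<noteq> var_edge w"
  shows "mon_in gens (mvar u + mvar v + mvar w) \<longleftrightarrow> gen_pair u v \<or> gen_pair u w \<or> gen_pair v w"
proof -
  have supp: "lookup (mvar u + mvar v + mvar w) x \<ge> 1 \<longleftrightarrow> x = u \<or> x = v \<or> x = w" for x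
    by (auto simp: lookup_add lookup_mvar)
  have "gen_pair x y \<longleftrightarrow> gen_pair y x" "\<not> gen_pair x x" for x y
    by (auto simp: gen_pair_def)
  then show ?thesis unfolding mon_in_gens_iff supp by blast
qed

lemma mon_in_zz: "i \<noteq> j \<Longrightarrow> mon_in gens (zz i j)"
  using mon_in_gens_2[of "Z j i" "Z i j"] by (simp add: zz_def add.commute gen_pair_def)

lemma not_mon_in_wz: "i \<noteq> j \<Longrightarrow> \<not> mon_in gens (wz i j)"
  using mon_in_gens_2[of "W j i" "Z i j"] by (simp add: wz_def gen_pair_def)

lemma not_mon_in_ww: "i \<noteq> j \<Longrightarrow> \<not> mon_in gens (ww i j)"
  using mon_in_gens_2[of "W j i" "W i j"] by (simp add: ww_def gen_pair_def)

lemma mdeg_zz: "mdeg (zz i j) = (\<lambda>e. (if i = e then 1 else 0) + (if j = e then 1 else 0))"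
  by (auto simp: zz_def mdeg_add mdeg_mvar fun_eq_iff)
lemma mdeg_wz: "mdeg (wz i j) = mdeg (zz i j)"
  by (auto simp: wz_def zz_def mdeg_add mdeg_mvar fun_eq_iff)
lemma mdeg_wz': "mdeg (wz j i) = mdeg (zz i j)"
  by (auto simp: wz_def zz_def mdeg_add mdeg_mvar fun_eq_iff)
lemma mdeg_ww: "mdeg (ww i j) = mdeg (zz i j)"
  by (auto simp: ww_def zz_def mdeg_add mdeg_mvar fun_eq_iff)

lemma lookup_Z_add_W: "lookup M (Z a b) + lookup M (W a b) = mdeg M b"
  by (simp add: Z_eq_if W_def mdeg_def)

lemma lookup_var_cases: "var_edge z = b \<Longrightarrow> lookup M z = lookup M (Z a b) \<or> lookup M z = lookup M (W a b)"
  using var_Z_or_W by metis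

lemma mdeg_zz_cases:
  assumes ij: "i \<noteq> j" and md: "mdeg M = mdeg (zz i j)"
  shows "M = zz i j \<or> M = wz i j \<or> M = wz j i \<or> M = ww i j"
proof -
  have mde: "mdeg M e = (if i = e then 1 else 0) + (if j = e then 1 else 0)" for e
    using md mdeg_zz by metis
  have si: "lookup M (Z j i) + lookup M (W j i) = 1" using lookup_Z_add_W[of M j i] mde[of i] ij by simp
  have sj: "lookup M (Z i j) + lookup M (W i j) = 1" using lookup_Z_add_W[of M i j] mde[of j] ij by simp
  define x where "x = (if lookup M (Z j i) \<ge> 1 then Z j i else W j i)"
  define y where "y = (if lookup M (Z i j) \<ge> 1 then Z i j else W i j)"
  have xv: "lookup M x = 1" "lookup M (opp_var x) = 0" "var_edge x = i" using si by (auto simp: x_def W_def)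
  have yv: "lookup M y = 1" "lookup M (opp_var y) = 0" "var_edge y = j" using sj by (auto simp: y_def W_def)
  have "M = mvar x + mvar y"
  proof (rule poly_mapping_eqI)
    fix z
    show "lookup M z = lookup (mvar x + mvar y) z"
    proof (cases "var_edge z = i")
      case True
      then have "z = x \<or> z = opp_var x" using var_cases xv(3) by metis
      then show ?thesis using xv yv ij True by (auto simp: lookup_add lookup_mvar)
    next
      case False
      show ?thesis
      proof (cases "var_edge z = j")
        case True
        then have "z = y \<or> z = opp_var y" using var_cases yv(3) by metis
        then show ?thesis using xv yv ij True by (auto simp: lookup_add lookup_mvar)
      next
        case False2: False
        have "mdeg M (var_edge z) = 0" using mde[of "var_edge z"] False False2 by auto
        then have "lookup M z = 0" using lookup_Z_add_W[of M "var_edge z" "var_edge z"] lookup_var_cases[of z "var_edge z" M "var_edge z"] by simp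
        moreover have "z \<noteq> x" "z \<noteq> y" using False False2 xv yv by auto
        ultimately show ?thesis by (simp add: lookup_add lookup_mvar)
      qed
    qed
  qed
  moreover have "x = Z j i \<or> x = W j i" "y = Z i j \<or> y = W i j" by (auto simp: x_def y_def)
  ultimately show ?thesis unfolding zz_def wz_def ww_def by (auto simp: add.commute)
qed

definition family :: "('e \<Rightarrow> 'e \<Rightarrow> 'k::field) \<Rightarrow> ('e \<Rightarrow> 'e \<Rightarrow> 'k) \<Rightarrow> 'e monom \<Rightarrow> ('e, 'k) mpoly" where
  "family c \<gamma> g = (\<Sum>(i,j)\<in>{(i,j). i \<noteq> j \<and> zz i j = g}. single (wz i j) (c i j) + single (ww i j) (\<gamma> i j))"

lemma zz_eq_zz_pairs:
  assumes "i \<noteq> j"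
  shows "{(a,b). a \<noteq> b \<and> zz a b = zz i j} = {(i,j),(j,i)}"
proof (intro set_eqI iffI)
  fix p assume "p \<in> {(a,b). a \<noteq> b \<and> zz a b = zz i j}"
  then obtain a b where p: "p = (a,b)" "a \<noteq> b" "zz a b = zz i j" by blast
  have "var_edge (Z a b) \<noteq> var_edge (Z b a)" using p(2) by simp
  then have "(Z a b = Z i j \<and> Z b a = Z j i) \<or> (Z a b = Z j i \<and> Z b a = Z i j)"
    using mvar_pair_eq p(3) unfolding zz_def by blast
  then have "(b = j \<and> a = i) \<or> (b = i \<and> a = j)" using var_edge_Z by metis
  then show "p \<in> {(i,j),(j,i)}" using p by auto
next
  fix p assume "p \<in> {(i,j),(j,i)}"
  then show "p \<in> {(a,b). a \<noteq> b \<and> zz a b = zz i j}" using assms zz_commute by auto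
qed

lemma family_zz:
  assumes "i \<noteq> j"
  shows "family c \<gamma> (zz i j) = single (wz i j) (c i j) + single (ww i j) (\<gamma> i j) + (single (wz j i) (c j i) + single (ww j i) (\<gamma> j i))"
  unfolding family_def zz_eq_zz_pairs[OF assms] using assms by simp

lemma lookup_family_zz:
  assumes "i \<noteq> j"
  shows "lookup (family c \<gamma> (zz i j)) M = (if M = wz i j then c i j else 0) + (if M = wz j i then c j i else 0)
     + (if M = ww i j then \<gamma> i j + \<gamma> j i else 0)"
  unfolding family_zz[OF assms] using ww_commute[of j i] by (simp add: lookup_add lookup_single when_def)

lemma proj_family:
  assumes "g \<in> gens"
  shows "proj gens (family c \<gamma> g) = family c \<gamma> g"
proof -
  obtain i j where g: "i \<noteq> j" "g = zz i j" using assms gens_def by blast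
  show ?thesis
  proof (rule poly_mapping_eqI)
    fix M
    show "lookup (proj gens (family c \<gamma> g)) M = lookup (family c \<gamma> g) M"
      using not_mon_in_wz[of i j] not_mon_in_wz[of j i] not_mon_in_ww[of i j] g
      by (auto simp: lookup_proj lookup_family_zz)
  qed
qed

lemma homogeneous_family:
  assumes "g \<in> gens"
  shows "homogeneous (mdeg g) (family c \<gamma> g)"
proof -
  obtain i j where g: "i \<noteq> j" "g = zz i j" using assms gens_def by blast
  show ?thesis unfolding homogeneous_def
  proof
    fix M assume "M \<in> keys (family c \<gamma> g)"
    then have "lookup (family c \<gamma> g) M \<noteq> 0" by (simp add: in_keys_iff)
    then have "M = wz i j \<or> M = wz j i \<or> M = ww i j" using g lookup_family_zz[OF g(1), of c \<gamma> M] by (auto split: if_splits)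
    then show "mdeg M = mdeg g" using g mdeg_wz mdeg_wz' mdeg_ww by auto
  qed
qed

lemma Z_neq_Z_swap: "a \<noteq> b \<Longrightarrow> Z a b \<noteq> Z b a" using Z_neq_Z by metis

lemma lookup_zz: "lookup (zz a b) z = (if Z a b = z then 1 else 0) + (if Z b a = z then 1 else 0)"
  by (simp add: zz_def lookup_add lookup_mvar)

lemma mdvd_zz_iff: "a \<noteq> b \<Longrightarrow> mdvd (zz a b) m \<longleftrightarrow> lookup m (Z a b) \<ge> 1 \<and> lookup m (Z b a) \<ge> 1"
  unfolding zz_def using mdvd_mvar_pair_iff Z_neq_Z_swap by blast

text \<open>The only syzygies of I_T that do not vanish modulo I_T come from pairs of generators
  zz i j, zz i k sharing the variable Z j i = Z k i; their lcm is Z j i * Z i j * Z i k.\<close>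

definition lcm_syzygies :: "('e monom \<Rightarrow> ('e, 'k::comm_ring_1) mpoly) \<Rightarrow> bool" where
  "lcm_syzygies \<psi> \<longleftrightarrow> (\<forall>i j k. i \<noteq> j \<longrightarrow> i \<noteq> k \<longrightarrow> j \<noteq> k \<longrightarrow> Z j i = Z k i \<longrightarrow>
     proj gens (single (mvar (Z i k)) 1 * \<psi> (zz i j)) = proj gens (single (mvar (Z i j)) 1 * \<psi> (zz i k)))"

lemma syzygy_vanish:
  assumes "a \<noteq> b" "c \<noteq> d" "{Z a b, Z b a} \<inter> {Z c d, Z d c} = {}" "mdvd (zz c d) m"
  shows "proj gens (single (m - zz a b) 1 * \<psi> (zz a b)) = 0"
proof -
  have "lookup m (Z c d) \<ge> 1" "lookup m (Z d c) \<ge> 1" using assms mdvd_zz_iff by auto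
  then have "mdvd (zz c d) (m - zz a b)"
    using mdvd_zz_iff[of c d] assms by (auto simp: lookup_minus_nat lookup_zz)
  then show ?thesis using proj_mult_mdvd_eq_zero zz_in_gens assms(2) by blast
qed

lemma syzygy_common_var:
  assumes "lcm_syzygies \<psi>" and d: "i \<noteq> j" "i \<noteq> k" "j \<noteq> k" "Z j i = Z k i"
    and m: "mdvd (zz i j) m" "mdvd (zz i k) m"
  shows "proj gens (single (m - zz i j) 1 * \<psi> (zz i j)) = proj gens (single (m - zz i k) 1 * \<psi> (zz i k))"
proof -
  define L where "L = mvar (Z j i) + mvar (Z i j) + mvar (Z i k)"
  have "mdvd L m" unfolding mdvd_iff_lookup
  proof
    fix z
    have "lookup m (Z i j) \<ge> 1" "lookup m (Z j i) \<ge> 1" "lookup m (Z i k) \<ge> 1"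
      using m mdvd_zz_iff d by auto
    moreover have "Z i k \<noteq> Z i j" "Z i k \<noteq> Z j i" "Z i j \<noteq> Z j i"
      using d Z_neq_Z by metis+
    ultimately show "lookup L z \<le> lookup m z" by (auto simp: L_def lookup_add lookup_mvar)
  qed
  then obtain t where t: "m = L + t" unfolding mdvd_def by blast
  have "m = zz i j + (mvar (Z i k) + t)" using t by (simp add: L_def zz_def add_ac)
  then have e1: "m - zz i j = t + mvar (Z i k)" by (metis add_diff_cancel_left' add.commute)
  have "m = zz i k + (mvar (Z i j) + t)" using t d(4) by (simp add: L_def zz_def add_ac)
  then have e2: "m - zz i k = t + mvar (Z i j)" by (metis add_diff_cancel_left' add.commute)
  have "proj gens (single (m - zz i j) 1 * \<psi> (zz i j))
      = proj gens (single t 1 * proj gens (single (mvar (Z i k)) 1 * \<psi> (zz i j)))"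
    unfolding e1 proj_mult_proj by (simp add: mult_single mult.assoc[symmetric])
  also have "\<dots> = proj gens (single t 1 * proj gens (single (mvar (Z i j)) 1 * \<psi> (zz i k)))"
    using assms(1) d unfolding lcm_syzygies_def by simp
  also have "\<dots> = proj gens (single (m - zz i k) 1 * \<psi> (zz i k))"
    unfolding e2 proj_mult_proj by (simp add: mult_single mult.assoc[symmetric])
  finally show ?thesis .
qed

lemma syzygy_common_index:
  assumes "lcm_syzygies \<psi>" "i \<noteq> j" "i \<noteq> k" "j \<noteq> k" "mdvd (zz i j) m" "mdvd (zz i k) m"
  shows "proj gens (single (m - zz i j) 1 * \<psi> (zz i j)) = proj gens (single (m - zz i k) 1 * \<psi> (zz i k))"
proof (cases "Z j i = Z k i")
  case False
  have "Z i k \<noteq> Z i j" "Z i k \<noteq> Z j i" "Z k i \<noteq> Z i j"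
    using assms Z_neq_Z by metis+
  then show ?thesis
    using syzygy_vanish[of i j i k m \<psi>] syzygy_vanish[of i k i j m \<psi>] assms False by auto
qed (use syzygy_common_var assms in blast)

lemma gens_share_index:
  assumes "a \<noteq> b" "c \<noteq> d" "zz a b \<noteq> zz c d" "c \<in> {a, b} \<or> d \<in> {a, b}"
  shows "\<exists>i j k. zz a b = zz i j \<and> zz c d = zz i k \<and> i \<noteq> j \<and> i \<noteq> k \<and> j \<noteq> k"
proof -
  consider "c = a" | "c = b" | "d = a" | "d = b" using assms(4) by auto
  then show ?thesis
  proof cases
    case 1
    then show ?thesis using assms by (intro exI[of _ a] exI[of _ b] exI[of _ d]) auto
  next
    case 2
    then show ?thesis using assms zz_commute[of a b] by (intro exI[of _ b] exI[of _ a] exI[of _ d]) auto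
  next
    case 3
    then show ?thesis using assms zz_commute[of c d] by (intro exI[of _ a] exI[of _ b] exI[of _ c]) auto
  next
    case 4
    then show ?thesis using assms zz_commute[of c d] zz_commute[of a b]
      by (intro exI[of _ b] exI[of _ a] exI[of _ c]) auto
  qed
qed

lemma compatible_if_lcm_syzygies:
  assumes "lcm_syzygies \<psi>" "g \<in> gens" "h \<in> gens" "mdvd g m" "mdvd h m"
  shows "proj gens (single (m - g) 1 * \<psi> g) = proj gens (single (m - h) 1 * \<psi> h)"
proof -
  obtain a b c d where ab: "a \<noteq> b" "g = zz a b" and cd: "c \<noteq> d" "h = zz c d"
    using assms(2,3) gens_def by blast
  show ?thesis
  proof (cases "c \<in> {a, b} \<or> d \<in> {a, b}")
    case True
    show ?thesis
    proof (cases "g = h")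
      case False
      then have "zz a b \<noteq> zz c d" using ab(2) cd(2) by simp
      from gens_share_index[OF ab(1) cd(1) this True]
      obtain i j k where "zz a b = zz i j" "zz c d = zz i k" "i \<noteq> j" "i \<noteq> k" "j \<noteq> k"
        by blast
      then show ?thesis using syzygy_common_index[OF assms(1)] assms(4,5) ab(2) cd(2) by metis
    qed simp
  next
    case False
    then have "{Z a b, Z b a} \<inter> {Z c d, Z d c} = {}" by (auto simp: Z_neq_Z)
    then show ?thesis
      using syzygy_vanish[of a b c d m \<psi>] syzygy_vanish[of c d a b m \<psi>] ab cd assms(4,5) by auto
  qed
qed

text \<open>wzz i j k and wwz i j k are Z i k times wz i j and ww i j: the monomials at which the
  syzygy between zz i j and zz i k constrains the coefficients.\<close>

definition wzz :: "'e \<Rightarrow> 'e \<Rightarrow> 'e \<Rightarrow> 'e monom" where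
  "wzz i j k = mvar (W j i) + mvar (Z i j) + mvar (Z i k)"

definition wwz :: "'e \<Rightarrow> 'e \<Rightarrow> 'e \<Rightarrow> 'e monom" where
  "wwz i j k = mvar (W j i) + mvar (W i j) + mvar (Z i k)"

lemma mon_in_wzz_iff:
  assumes "i \<noteq> j" "i \<noteq> k" "j \<noteq> k" "Z j i = Z k i"
  shows "mon_in gens (wzz i j k) \<longleftrightarrow> (Z i j = Z k j \<and> Z i k = Z j k)"
  unfolding wzz_def using mon_in_gens_3[of "W j i" "Z i j" "Z i k"] assms by (auto simp: eq_commute gen_pair_def)

lemma mon_in_wwz_iff:
  assumes "i \<noteq> j" "i \<noteq> k" "j \<noteq> k" "Z j i = Z k i"
  shows "mon_in gens (wwz i j k) \<longleftrightarrow> (Z i j \<noteq> Z k j \<and> Z i k = Z j k)"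
  unfolding wwz_def using mon_in_gens_3[of "W j i" "W i j" "Z i k"] assms by (auto simp: eq_commute gen_pair_def)

lemma wzz_commute: "Z j i = Z k i \<Longrightarrow> wzz i k j = wzz i j k"
  unfolding wzz_def W_def by (simp add: add_ac)

lemma proj_mult_family:
  assumes d: "i \<noteq> j" "i \<noteq> k" "j \<noteq> k" and e: "Z j i = Z k i"
  shows "proj gens (single (mvar (Z i k)) 1 * family c \<gamma> (zz i j)) =
     (if mon_in gens (wzz i j k) then 0 else single (wzz i j k) (c i j)) +
     (if mon_in gens (wwz i j k) then 0 else single (wwz i j k) (\<gamma> i j + \<gamma> j i))"
proof -
  define X2 where "X2 = mvar (Z i k) + wz j i"
  have x2: "mon_in gens X2"
  proof -
    have ne: "Z i k \<noteq> Z j i" "Z i k \<noteq> W i j" using d Z_neq_Z W_neq_Z by metis+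
    have "mdvd (zz i k) X2"
      using mdvd_zz_iff[of i k] d e ne by (auto simp: X2_def wz_def lookup_add lookup_mvar)
    then show ?thesis using zz_in_gens d unfolding mon_in_def by blast
  qed
  have "single (mvar (Z i k)) 1 * family c \<gamma> (zz i j) =
      single (wzz i j k) (c i j) + single (wwz i j k) (\<gamma> i j) + (single X2 (c j i) + single (wwz i j k) (\<gamma> j i))"
    unfolding family_zz[OF d(1)] using ww_commute[of j i]
    by (simp add: distrib_left mult_single wzz_def wwz_def X2_def wz_def ww_def add_ac)
  then have "proj gens (single (mvar (Z i k)) 1 * family c \<gamma> (zz i j)) =
      proj gens (single (wzz i j k) (c i j)) + proj gens (single (wwz i j k) (\<gamma> i j)) + (proj gens (single X2 (c j i)) + proj gens (single (wwz i j k) (\<gamma> j i)))"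
    by (simp add: proj_add)
  also have "\<dots> = (if mon_in gens (wzz i j k) then 0 else single (wzz i j k) (c i j)) +
     (if mon_in gens (wwz i j k) then 0 else single (wwz i j k) (\<gamma> i j + \<gamma> j i))"
    using x2 by (simp add: proj_single single_add)
  finally show ?thesis .
qed

lemma family_lcm:
  assumes d: "i \<noteq> j" "i \<noteq> k" "j \<noteq> k" and e: "Z j i = Z k i"
   and h1: "\<not> mon_in gens (wzz i j k) \<Longrightarrow> c i j = c i k"
   and h2: "\<not> mon_in gens (wwz i j k) \<Longrightarrow> \<gamma> i j + \<gamma> j i = 0"
   and h3: "\<not> mon_in gens (wwz i k j) \<Longrightarrow> \<gamma> i k + \<gamma> k i = 0"
  shows "proj gens (single (mvar (Z i k)) 1 * family c \<gamma> (zz i j)) = proj gens (single (mvar (Z i j)) 1 * family c \<gamma> (zz i k))"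
  unfolding proj_mult_family[OF d e] proj_mult_family[OF d(2) d(1) d(3)[symmetric] e[symmetric]]
    wzz_commute[OF e] using h1 h2 h3 by simp

lemma compatible_family:
  assumes "\<And>i j k. i \<noteq> j \<Longrightarrow> i \<noteq> k \<Longrightarrow> j \<noteq> k \<Longrightarrow> Z j i = Z k i \<Longrightarrow>
      \<not> mon_in gens (wzz i j k) \<Longrightarrow> c i j = c i k"
    and "\<And>i j k. i \<noteq> j \<Longrightarrow> i \<noteq> k \<Longrightarrow> j \<noteq> k \<Longrightarrow> Z j i = Z k i \<Longrightarrow>
      \<not> mon_in gens (wwz i j k) \<Longrightarrow> \<gamma> i j + \<gamma> j i = 0"
  shows "compatible gens (family c \<gamma>)"
proof -
  have "lcm_syzygies (family c \<gamma>)"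
    unfolding lcm_syzygies_def
  proof (intro allI impI)
    fix i j k assume d: "i \<noteq> j" "i \<noteq> k" "j \<noteq> k" "Z j i = Z k i"
    show "proj gens (single (mvar (Z i k)) 1 * family c \<gamma> (zz i j))
        = proj gens (single (mvar (Z i j)) 1 * family c \<gamma> (zz i k))"
      by (rule family_lcm[OF d])
        (use assms(1)[OF d] assms(2)[OF d] assms(2)[OF d(2,1) d(3)[symmetric] d(4)[symmetric]] in auto)
  qed
  then show ?thesis unfolding compatible_def
    using proj_family homogeneous_family compatible_if_lcm_syzygies by blast
qed

lemma lcm_syzygies_compatible:
  assumes "compatible gens \<psi>"
  shows "lcm_syzygies \<psi>"
  unfolding lcm_syzygies_def
proof (intro allI impI)
  fix i j k assume d: "i \<noteq> j" "i \<noteq> k" "j \<noteq> k" "Z j i = Z k i"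
  define m where "m = mvar (Z j i) + mvar (Z i j) + mvar (Z i k)"
  have m1: "m = zz i j + mvar (Z i k)" by (simp add: m_def zz_def add_ac)
  have m2: "m = zz i k + mvar (Z i j)" using d(4) by (simp add: m_def zz_def add_ac)
  show "proj gens (single (mvar (Z i k)) 1 * \<psi> (zz i j)) = proj gens (single (mvar (Z i j)) 1 * \<psi> (zz i k))"
    using compatible_syzygy[OF assms zz_in_gens[OF d(1)] zz_in_gens[OF d(2)], of m] m1 m2
    by (metis add_diff_cancel_left' mdvd_add_self)
qed

lemma lcm_syzygies_coeffs:
  assumes "lcm_syzygies \<psi>" and d: "i \<noteq> j" "i \<noteq> k" "j \<noteq> k" "Z j i = Z k i"
  shows "\<not> mon_in gens (wzz i j k) \<Longrightarrow> lookup (\<psi> (zz i j)) (wz i j) = lookup (\<psi> (zz i k)) (wz i k)"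
    and "\<not> mon_in gens (wwz i j k) \<Longrightarrow> lookup (\<psi> (zz i j)) (ww i j) = 0"
proof -
  have syz: "lookup (proj gens (single (mvar (Z i k)) 1 * \<psi> (zz i j))) M
      = lookup (proj gens (single (mvar (Z i j)) 1 * \<psi> (zz i k))) M" for M
    using assms unfolding lcm_syzygies_def by simp
  have a1: "wzz i j k = mvar (Z i k) + wz i j" by (simp add: wzz_def wz_def add_ac)
  have a2: "wzz i j k = mvar (Z i j) + wz i k" using d(4) by (simp add: wzz_def wz_def W_def add_ac)
  have a3: "wwz i j k = mvar (Z i k) + ww i j" by (simp add: wwz_def ww_def add_ac)
  have "Z i j \<noteq> W j i" "Z i j \<noteq> Z i k" using d Z_neq_Z W_neq_Z by metis+
  then have nd: "\<not> mdvd (mvar (Z i j)) (wwz i j k)"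
    unfolding mdvd_iff_lookup by (auto simp: wwz_def lookup_add lookup_mvar)
  show "\<not> mon_in gens (wzz i j k) \<Longrightarrow> lookup (\<psi> (zz i j)) (wz i j) = lookup (\<psi> (zz i k)) (wz i k)"
    using syz[of "wzz i j k"] unfolding lookup_proj lookup_single_mult
    by (metis a1 a2 add_diff_cancel_left' mdvd_add_self mult_1)
  show "\<not> mon_in gens (wwz i j k) \<Longrightarrow> lookup (\<psi> (zz i j)) (ww i j) = 0"
    using syz[of "wwz i j k"] nd unfolding lookup_proj lookup_single_mult
    by (metis a3 add_diff_cancel_left' mdvd_add_self mult_1)
qed

section \<open>A basis of the tangent space\<close>

definition edges_at :: "'v \<Rightarrow> 'e set" where
  "edges_at v = {e. incident e v}"

definition adj_pairs :: "('e \<times> 'e) set" where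
  "adj_pairs = {(i, j). i \<noteq> j \<and> (\<exists>v. incident i v \<and> incident j v)}"

definition deg2_vertices :: "'v set" where
  "deg2_vertices = {v. card (edges_at v) = 2}"

definition deg2_pair :: "'v \<Rightarrow> 'e \<times> 'e" where
  "deg2_pair v = (SOME p. fst p \<noteq> snd p \<and> edges_at v = {fst p, snd p})"

lemma finite_vertices: "finite (UNIV :: 'v set)"
proof -
  obtain t :: 'v where True by blast
  have "x \<in> insert t (range tail \<union> range head)" for x
  proof -
    have "(t, x) \<in> (adj_without tail head {})\<^sup>*" using linked_connected unfolding linked_def by blast
    then show ?thesis by (induction rule: rtrancl_induct) (auto simp: adj_without_def)
  qed
  then have "UNIV = insert t (range tail \<union> range head)" by blast
  then show ?thesis by (metis finite_UnI finite_imageI finite_insert finite)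
qed

lemma finite_deg2_vertices [simp]: "finite deg2_vertices"
  using finite_vertices by (rule finite_subset[OF subset_UNIV])

lemma deg2_pair_spec:
  assumes "v \<in> deg2_vertices"
  shows "fst (deg2_pair v) \<noteq> snd (deg2_pair v) \<and> edges_at v = {fst (deg2_pair v), snd (deg2_pair v)}"
proof -
  obtain a b where "a \<noteq> b" "edges_at v = {a, b}"
    using assms unfolding deg2_vertices_def by (auto simp: card_2_iff)
  then have "\<exists>p. fst p \<noteq> snd p \<and> edges_at v = {fst p, snd p}" by (intro exI[of _ "(a, b)"]) simp
  then show ?thesis unfolding deg2_pair_def by (rule someI_ex)
qed

lemma deg2_vertex_unique:
  assumes "i \<noteq> j" "edges_at v = {i, j}" "edges_at w = {i, j}"
  shows "v = w"
  using common_vertex_unique[OF assms(1)] assms(2,3) unfolding edges_at_def by blast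

text \<open>The basis of the tangent space: for an ordered pair (i, j) of adjacent edges, the family
  with c i k = 1 exactly when the path from i to k leaves i through j; for a vertex of degree two
  with edges a, b, the family whose only nonzero coefficient is the one of ww a b.\<close>

definition basis_c :: "('e \<times> 'e) + 'v \<Rightarrow> 'e \<Rightarrow> 'e \<Rightarrow> 'k::field" where
  "basis_c d i k = (case d of Inl p \<Rightarrow> (if i = fst p \<and> k \<noteq> i \<and> branch i k = snd p then 1 else 0)
     | Inr v \<Rightarrow> 0)"

definition basis_g :: "('e \<times> 'e) + 'v \<Rightarrow> 'e \<Rightarrow> 'e \<Rightarrow> 'k::field" where
  "basis_g d a b = (case d of Inl p \<Rightarrow> 0 | Inr v \<Rightarrow> (if (a, b) = deg2_pair v then 1 else 0))"

definition basis_family :: "('e \<times> 'e) + 'v \<Rightarrow> 'e monom \<Rightarrow> ('e, 'k::field) mpoly" where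
  "basis_family d = family (basis_c d) (basis_g d)"

definition basis_index :: "(('e \<times> 'e) + 'v) set" where
  "basis_index = Inl ` adj_pairs \<union> Inr ` deg2_vertices"

definition coord :: "('e \<times> 'e) + 'v \<Rightarrow> ('e monom \<Rightarrow> ('e, 'k::field) mpoly) \<Rightarrow> 'k" where
  "coord d \<psi> = (case d of Inl p \<Rightarrow> lookup (\<psi> (zz (fst p) (snd p))) (wz (fst p) (snd p))
     | Inr v \<Rightarrow> lookup (\<psi> (zz (fst (deg2_pair v)) (snd (deg2_pair v)))) (ww (fst (deg2_pair v)) (snd (deg2_pair v))))"

lemma mon_in_wzz_iff_closer:
  assumes "i \<noteq> j" "i \<noteq> k" "j \<noteq> k" "Z j i = Z k i"
  shows "mon_in gens (wzz i j k) \<longleftrightarrow> \<not> separates j i k \<and> \<not> separates k i j"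
  using mon_in_wzz_iff[OF assms] by (simp add: Z_eq_Z_iff)

lemma mon_in_wwz_iff_closer:
  assumes "i \<noteq> j" "i \<noteq> k" "j \<noteq> k" "Z j i = Z k i"
  shows "mon_in gens (wwz i j k) \<longleftrightarrow> separates j i k \<and> \<not> separates k i j"
  using mon_in_wwz_iff[OF assms] by (simp add: Z_eq_Z_iff)

lemma basis_g_pair:
  assumes "v \<in> deg2_vertices" "i \<noteq> j"
  shows "basis_g (Inr v) i j + basis_g (Inr v) j i = (if edges_at v = {i, j} then 1 else (0::'k::field))"
  using deg2_pair_spec[OF assms(1)] assms(2) unfolding basis_g_def
  by (cases "deg2_pair v") (auto simp: doubleton_eq_iff)

lemma compatible_basis_family:
  assumes "d \<in> basis_index"
  shows "compatible gens (basis_family d :: _ \<Rightarrow> ('e, 'k::field) mpoly)"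
  unfolding basis_family_def
proof (rule compatible_family)
  fix i j k assume d: "i \<noteq> j" "i \<noteq> k" "j \<noteq> k" "Z j i = Z k i" and "\<not> mon_in gens (wzz i j k)"
  then have "branch i j = branch i k"
    using branch_eq[OF d(1-3)] mon_in_wzz_iff_closer[OF d] by (simp add: Z_eq_Z_iff)
  then show "basis_c d i j = basis_c d i k" using d by (simp add: basis_c_def split: sum.splits)
next
  fix i j k assume d: "i \<noteq> j" "i \<noteq> k" "j \<noteq> k" "Z j i = Z k i" and n: "\<not> mon_in gens (wwz i j k)"
  show "basis_g d i j + basis_g d j i = (0::'k)"
  proof (cases d)
    case (Inr v)
    then have v: "v \<in> deg2_vertices" using assms by (auto simp: basis_index_def)
    have "edges_at v \<noteq> {i, j}"
    proof
      assume "edges_at v = {i, j}"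
      then have "incident i v" "incident j v" "\<forall>e. incident e v \<longrightarrow> e = i \<or> e = j"
        unfolding edges_at_def by auto
      then show False
        using closer_at_degree_two_vertex[OF d(1) _ _ _ d(2)[symmetric] d(3)[symmetric]] d(4) n
          mon_in_wwz_iff_closer[OF d]
        by (simp add: Z_eq_Z_iff)
    qed
    then show ?thesis using basis_g_pair[OF v d(1)] Inr by simp
  qed (simp add: basis_g_def)
qed

lemma wz_ww_distinct:
  assumes "i \<noteq> j"
  shows "wz i j \<noteq> wz j i" "wz i j \<noteq> ww i j" "wz j i \<noteq> ww i j"
proof -
  have "W j i \<noteq> Z i j" "W i j \<noteq> Z j i" "Z j i \<noteq> Z i j"
    using W_neq_Z Z_neq_Z assms by metis+
  moreover have "W i j \<noteq> Z i j" by simp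
  ultimately have "lookup (wz i j) (Z i j) = 1" "lookup (wz j i) (Z i j) = 0" "lookup (ww i j) (Z i j) = 0"
    "lookup (wz j i) (Z j i) = 1" "lookup (ww i j) (Z j i) = 0"
    by (auto simp: wz_def ww_def lookup_add lookup_mvar W_neq_Z)
  then show "wz i j \<noteq> wz j i" "wz i j \<noteq> ww i j" "wz j i \<noteq> ww i j" by auto
qed

lemma lookup_family_wz:
  assumes "i \<noteq> j"
  shows "lookup (family c \<gamma> (zz i j)) (wz i j) = c i j"
  unfolding lookup_family_zz[OF assms] using wz_ww_distinct[OF assms] by auto

lemma lookup_family_ww:
  assumes "i \<noteq> j"
  shows "lookup (family c \<gamma> (zz i j)) (ww i j) = \<gamma> i j + \<gamma> j i"
  unfolding lookup_family_zz[OF assms] using wz_ww_distinct[OF assms] by auto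

lemma coord_basis_family:
  assumes "d \<in> basis_index" "d' \<in> basis_index"
  shows "coord d (basis_family d') = (if d = d' then 1 else (0::'k::field))"
proof (cases d)
  case (Inl p)
  obtain i j where p: "p = (i, j)" by (cases p)
  have ij: "i \<noteq> j" "branch i j = j"
    using assms(1) Inl p branch_adjacent by (auto simp: basis_index_def adj_pairs_def)
  have "coord d (basis_family d' :: _ \<Rightarrow> ('e, 'k) mpoly) = basis_c d' i j"
    using Inl p by (simp add: coord_def basis_family_def lookup_family_wz[OF ij(1)])
  then show ?thesis using ij Inl p by (auto simp: basis_c_def split: sum.splits)
next
  case (Inr v)
  have v: "v \<in> deg2_vertices" using assms(1) Inr by (auto simp: basis_index_def)
  obtain a b where ab: "deg2_pair v = (a, b)" by (cases "deg2_pair v")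
  have ab': "a \<noteq> b" "edges_at v = {a, b}" using deg2_pair_spec[OF v] ab by auto
  have "coord d (basis_family d' :: _ \<Rightarrow> ('e, 'k) mpoly) = basis_g d' a b + basis_g d' b a"
    using Inr ab by (simp add: coord_def basis_family_def lookup_family_ww[OF ab'(1)])
  also have "\<dots> = (if d = d' then 1 else 0)"
  proof (cases d')
    case (Inr w)
    have w: "w \<in> deg2_vertices" using assms(2) Inr by (auto simp: basis_index_def)
    have "edges_at w = {a, b} \<longleftrightarrow> w = v"
      using deg2_vertex_unique[OF ab'(1) _ ab'(2)] ab'(2) by blast
    then show ?thesis using basis_g_pair[OF w ab'(1)] \<open>d = Inr v\<close> Inr by (cases "w = v") auto
  qed (simp add: basis_g_def \<open>d = Inr v\<close>)
  finally show ?thesis .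
qed

lemma coeff_wz_branch:
  assumes "compatible gens \<psi>" "i \<noteq> j"
  shows "lookup (\<psi> (zz i (branch i j))) (wz i (branch i j)) = lookup (\<psi> (zz i j)) (wz i j)"
proof -
  define k where "k = branch i j"
  have b: "k \<noteq> i" "k = j \<or> separates k i j" "closer k i = closer j i"
    using branch_spec[OF not_sym[OF assms(2)]] unfolding k_def by blast+
  show ?thesis
  proof (cases "k = j")
    case False
    have d: "i \<noteq> j" "i \<noteq> k" "j \<noteq> k" "Z j i = Z k i" using assms(2) b False by (auto simp: Z_eq_Z_iff)
    have "\<not> mon_in gens (wzz i j k)" using mon_in_wzz_iff_closer[OF d] b False by auto
    then show ?thesis using lcm_syzygies_coeffs(1)[OF lcm_syzygies_compatible[OF assms(1)] d] k_def by simp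
  qed (simp add: k_def)
qed

lemma coeff_ww_eq_zero:
  assumes "compatible gens \<psi>" "i \<noteq> j" "\<forall>v. edges_at v \<noteq> {i, j}"
  shows "lookup (\<psi> (zz i j)) (ww i j) = 0"
proof -
  obtain k where d: "i \<noteq> j" "i \<noteq> k" "j \<noteq> k" "Z j i = Z k i" and "\<not> mon_in gens (wwz i j k)"
  proof (cases "\<exists>v. incident i v \<and> incident j v")
    case False
    then obtain k where "k \<noteq> i" "k \<noteq> j" "closer j i = closer k i" "separates k i j"
      using ex_edge_separating[OF assms(2)] by blast
    then show ?thesis using that[of k] assms(2) mon_in_wwz_iff_closer[of i j k] by (auto simp: Z_eq_Z_iff)
  next
    case True
    then obtain v where v: "incident i v" "incident j v" by blast
    moreover have "edges_at v \<noteq> {i, j}" using assms(3) by blast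
    ultimately obtain k where k: "k \<noteq> i" "k \<noteq> j" "incident k v" unfolding edges_at_def by blast
    then have "closer j i = closer k i \<and> closer i j = closer k j"
      using closer_at_common_vertex[of i j k v] assms(2) v by auto
    then show ?thesis using that[of k] assms(2) k mon_in_wwz_iff_closer[of i j k] by (auto simp: Z_eq_Z_iff)
  qed
  then show ?thesis using lcm_syzygies_coeffs(2)[OF lcm_syzygies_compatible[OF assms(1)] d] by simp
qed

lemma sum_basis_index:
  "(\<Sum>d\<in>basis_index. f d) = (\<Sum>p\<in>adj_pairs. f (Inl p)) + (\<Sum>v\<in>deg2_vertices. f (Inr v))"
  unfolding basis_index_def
  by (subst sum.union_disjoint) (auto simp: adj_pairs_def sum.reindex)

lemma sum_coord_basis_c:
  assumes "compatible gens \<psi>" "i \<noteq> j"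
  shows "(\<Sum>d\<in>basis_index. coord d \<psi> * basis_c d i j) = lookup (\<psi> (zz i j)) (wz i j)"
proof -
  have mem: "(i, branch i j) \<in> adj_pairs"
    using branch_spec[OF not_sym[OF assms(2)]] incident_near_end[of i j]
    unfolding adj_pairs_def by auto
  have "(\<Sum>d\<in>basis_index. coord d \<psi> * basis_c d i j) = (\<Sum>p\<in>adj_pairs. coord (Inl p) \<psi> * basis_c (Inl p) i j)"
    unfolding sum_basis_index by (simp add: basis_c_def)
  also have "\<dots> = (\<Sum>p\<in>adj_pairs. if p = (i, branch i j) then coord (Inl p) \<psi> else 0)"
    using assms(2) by (intro sum.cong refl) (auto simp: basis_c_def)
  also have "\<dots> = coord (Inl (i, branch i j)) \<psi>" using mem by simp
  also have "\<dots> = lookup (\<psi> (zz i j)) (wz i j)"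
    using coeff_wz_branch[OF assms] by (simp add: coord_def)
  finally show ?thesis .
qed

lemma sum_coord_basis_g:
  assumes "compatible gens \<psi>" "i \<noteq> j"
  shows "(\<Sum>d\<in>basis_index. coord d \<psi> * (basis_g d i j + basis_g d j i)) = lookup (\<psi> (zz i j)) (ww i j)"
proof -
  have "(\<Sum>d\<in>basis_index. coord d \<psi> * (basis_g d i j + basis_g d j i))
      = (\<Sum>v\<in>deg2_vertices. coord (Inr v) \<psi> * (basis_g (Inr v) i j + basis_g (Inr v) j i))"
    unfolding sum_basis_index by (simp add: basis_g_def)
  also have "\<dots> = (\<Sum>v\<in>deg2_vertices. if edges_at v = {i, j} then coord (Inr v) \<psi> else 0)"
    by (intro sum.cong refl) (simp add: basis_g_pair[OF _ assms(2)])
  also have "\<dots> = lookup (\<psi> (zz i j)) (ww i j)"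
  proof (cases "\<exists>v. edges_at v = {i, j}")
    case True
    then obtain v where v: "edges_at v = {i, j}" by blast
    then have v2: "v \<in> deg2_vertices" using assms(2) by (simp add: deg2_vertices_def)
    have "(\<Sum>w\<in>deg2_vertices. if edges_at w = {i, j} then coord (Inr w) \<psi> else 0) = coord (Inr v) \<psi>"
    proof -
      have "edges_at w = {i, j} \<longleftrightarrow> w = v" for w
        using v deg2_vertex_unique[OF assms(2) _ v] by blast
      then show ?thesis using v2 by simp
    qed
    moreover have "deg2_pair v = (i, j) \<or> deg2_pair v = (j, i)"
      using deg2_pair_spec[OF v2] v assms(2) by (cases "deg2_pair v") (auto simp: doubleton_eq_iff)
    ultimately show ?thesis using zz_commute[of i j] ww_commute[of i j] by (auto simp: coord_def)
  next
    case False
    then show ?thesis using coeff_ww_eq_zero[OF assms] by auto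
  qed
  finally show ?thesis .
qed

lemma lookup_compatible_zz:
  assumes "compatible gens \<psi>" "i \<noteq> j" "M \<noteq> wz i j" "M \<noteq> wz j i" "M \<noteq> ww i j"
  shows "lookup (\<psi> (zz i j)) M = 0"
proof (rule ccontr)
  assume nz: "lookup (\<psi> (zz i j)) M \<noteq> 0"
  then have "mdeg M = mdeg (zz i j)"
    using compatible_homogeneous[OF assms(1) zz_in_gens[OF assms(2)]]
    by (simp add: homogeneous_def in_keys_iff)
  then have "M = zz i j" using mdeg_zz_cases[OF assms(2)] assms(3-5) by blast
  then show False
    using nz compatible_proj[OF assms(1) zz_in_gens[OF assms(2)]] mon_in_zz[OF assms(2)]
    by (metis lookup_proj)
qed

lemma compatible_eq_sum_basis:
  assumes "compatible gens \<psi>" "g \<in> gens"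
  shows "\<psi> g = (\<Sum>d\<in>basis_index. single 0 (coord d \<psi>) * (basis_family d g :: ('e, 'k::field) mpoly))"
proof -
  obtain i j where ij: "i \<noteq> j" "g = zz i j" using assms(2) gens_def by blast
  show ?thesis
  proof (rule poly_mapping_eqI)
    fix M
    have "lookup (\<Sum>d\<in>basis_index. single 0 (coord d \<psi>) * (basis_family d g :: ('e, 'k) mpoly)) M
      = (if M = wz i j then \<Sum>d\<in>basis_index. coord d \<psi> * basis_c d i j else 0)
      + (if M = wz j i then \<Sum>d\<in>basis_index. coord d \<psi> * basis_c d j i else 0)
      + (if M = ww i j then \<Sum>d\<in>basis_index. coord d \<psi> * (basis_g d i j + basis_g d j i) else 0)"
      unfolding lookup_sum ij(2) basis_family_def
      by (simp add: lookup_single_mult mdvd_def lookup_family_zz[OF ij(1)] sum.distrib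
          distrib_left if_distrib[of "(*) _"] sum.If_cases)
    also have "\<dots> = lookup (\<psi> g) M"
      using wz_ww_distinct[OF ij(1)] sum_coord_basis_c[OF assms(1) ij(1)]
        sum_coord_basis_c[OF assms(1) not_sym[OF ij(1)]] sum_coord_basis_g[OF assms(1) ij(1)]
        lookup_compatible_zz[OF assms(1) ij(1), of M] ij(2) zz_commute[of i j]
      by auto
    finally show "lookup (\<psi> g) M = lookup (\<Sum>d\<in>basis_index. single 0 (coord d \<psi>) * basis_family d g) M"
      by simp
  qed
qed

lemma coord_cong:
  assumes "d \<in> basis_index" "\<And>g. g \<in> gens \<Longrightarrow> \<psi> g = \<psi>' g"
  shows "coord d \<psi> = coord d \<psi>'"
proof (cases d)
  case (Inl p)
  then have "fst p \<noteq> snd p" using assms(1) by (auto simp: basis_index_def adj_pairs_def)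
  then show ?thesis using Inl assms(2) zz_in_gens by (simp add: coord_def)
next
  case (Inr v)
  then have "fst (deg2_pair v) \<noteq> snd (deg2_pair v)"
    using assms(1) deg2_pair_spec by (auto simp: basis_index_def)
  then show ?thesis using Inr assms(2) zz_in_gens by (simp add: coord_def)
qed

lemma coord_sum_smult:
  "coord d (\<lambda>g. (\<Sum>v\<in>t. (\<lambda>p. smult_mp (u v) (v p))) (single g 1))
    = (\<Sum>v\<in>t. u v * coord d (\<lambda>g. v (single g 1) :: ('e, 'k::field) mpoly))"
  by (cases d) (simp_all only: coord_def sum.case sum_apply lookup_sum lookup_smult_mp)

lemma tangent_dim_gens: "tangent_dim (mon_ideal gens :: ('e, 'k::field) mpoly set) = card basis_index"
proof -
  define sc where "sc = (\<lambda>(c::'k) (\<phi> :: ('e, 'k) mpoly \<Rightarrow> ('e, 'k) mpoly) p. smult_mp c (\<phi> p))"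
  interpret V: vector_space sc unfolding sc_def by (rule vector_space_pointwise)
  define T where "T = tangent_hom (mon_ideal gens :: ('e, 'k) mpoly set)"
  define b where "b d = (extend gens (basis_family d) :: ('e, 'k) mpoly \<Rightarrow> ('e, 'k) mpoly)" for d
  define f where "f d \<phi> = coord d (\<lambda>g. \<phi> (single g (1::'k)))"
    for d and \<phi> :: "('e, 'k) mpoly \<Rightarrow> ('e, 'k) mpoly"
  have dual: "f d (b d') = (if d = d' then 1 else 0)"
    if "d \<in> basis_index" "d' \<in> basis_index" for d d'
  proof -
    have "f d (b d') = coord d (basis_family d')"
      unfolding f_def b_def
      by (rule coord_cong[OF that(1)]) (rule extend_gen[OF compatible_basis_family[OF that(2)]])
    then show ?thesis using coord_basis_family[OF that] by simp
  qed
  have linear: "f d (\<Sum>v\<in>t. sc (u v) v) = (\<Sum>v\<in>t. u v * f d v)" for d t u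
    unfolding f_def sc_def by (rule coord_sum_smult)
  have "b ` basis_index \<subseteq> T"
    unfolding T_def b_def using extend_in_tangent_hom[OF compatible_basis_family] by blast
  moreover have "T \<subseteq> V.span (b ` basis_index)"
  proof
    fix \<phi> assume "\<phi> \<in> T"
    then have \<phi>: "\<phi> \<in> tangent_hom (mon_ideal gens)" unfolding T_def .
    have "\<phi> = extend gens (\<lambda>g. \<phi> (single g 1))" using extend_tangent_hom[OF \<phi>] by simp
    also have "\<dots> = extend gens (\<lambda>g. \<Sum>d\<in>basis_index. single 0 (f d \<phi>) * basis_family d g)"
      unfolding f_def
      by (rule extend_cong) (rule compatible_eq_sum_basis[OF compatible_tangent_hom[OF \<phi>]])
    also have "\<dots> = (\<lambda>p. \<Sum>d\<in>basis_index. single 0 (f d \<phi>) * b d p)"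
      unfolding b_def by (rule ext) (rule extend_linear)
    also have "\<dots> = (\<Sum>d\<in>basis_index. sc (f d \<phi>) (b d))"
      by (rule ext) (simp add: sc_def sum_apply smult_mp_eq_mult)
    finally have \<phi>_eq: "\<phi> = (\<Sum>d\<in>basis_index. sc (f d \<phi>) (b d))" .
    have "(\<Sum>d\<in>basis_index. sc (f d \<phi>) (b d)) \<in> V.span (b ` basis_index)"
      by (intro V.span_sum V.span_scale V.span_base) auto
    then show "\<phi> \<in> V.span (b ` basis_index)" using \<phi>_eq by simp
  qed
  ultimately have "V.dim T = card basis_index"
    by (rule V.dim_eq_card_dual_basis[OF _ _ dual linear])
  then show ?thesis unfolding tangent_dim_def T_def sc_def .
qed

lemma vdeg_eq_card_edges_at: "vdeg tail head v = card (edges_at v)"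
proof -
  have "edges_at v = {e. tail e = v} \<union> {e. head e = v}" unfolding edges_at_def incident_def by auto
  moreover have "{e. tail e = v} \<inter> {e. head e = v} = {}"
    using tail_neq_head by (metis (mono_tags) disjoint_iff mem_Collect_eq)
  ultimately show ?thesis unfolding vdeg_def by (simp add: card_Un_disjoint)
qed

lemma card_adj_pairs: "card adj_pairs = (\<Sum>v\<in>UNIV. vdeg tail head v * (vdeg tail head v - 1))"
proof -
  define P where "P v = {(i, j). i \<in> edges_at v \<and> j \<in> edges_at v \<and> i \<noteq> j}" for v
  have "adj_pairs = (\<Union>v\<in>UNIV. P v)" unfolding adj_pairs_def P_def edges_at_def by auto
  moreover have "P v \<inter> P w = {}" if "v \<noteq> w" for v w
    using common_vertex_unique that unfolding P_def edges_at_def by blast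
  ultimately have "card adj_pairs = (\<Sum>v\<in>UNIV. card (P v))"
    using finite_vertices by (simp add: card_UN_disjoint P_def)
  then show ?thesis
    unfolding P_def vdeg_eq_card_edges_at by (simp add: card_offdiag)
qed

lemma card_basis_index: "card basis_index = (\<Sum>v\<in>UNIV. f_loc (vdeg tail head v))"
proof -
  have "card basis_index = card adj_pairs + card deg2_vertices"
    unfolding basis_index_def
    by (subst card_Un_disjoint) (auto simp: adj_pairs_def card_image)
  also have "card deg2_vertices = (\<Sum>v\<in>UNIV. if vdeg tail head v = 2 then 1 else 0)"
    unfolding deg2_vertices_def vdeg_eq_card_edges_at using finite_vertices
    by (simp add: sum.If_cases)
  finally show ?thesis
    unfolding card_adj_pairs f_loc_eq by (simp add: sum.distrib)
qed

end

theorem proposition4p6: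
  fixes tail head :: "'e::finite \<Rightarrow> 'v::finite"
  assumes "card (UNIV :: 'v set) = card (UNIV :: 'e set) + 1"
    and "is_tree tail head"
  shows "tangent_dim (I_T tail head :: ('e, 'k::field) mpoly set)
           = (\<Sum>v\<in>UNIV. f_loc (vdeg tail head v))"
proof -
  interpret tree tail head by unfold_locales (rule assms(2))
  show ?thesis
    unfolding I_T_eq_mon_ideal tangent_dim_gens card_basis_index ..
qed

end
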